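(* Let $d\ge 3$ be fixed, $n\to\infty$ with $dn$ even, and run the push model on the configuration multigraph $\widetilde{\mathbb{G}}(n,d)$ starting from vertex $1$. Let $T_0$ be the first round in which the number of informed vertices exceeds $\ln^7 n$. Then with probability $1-o(1)$ we have $T_0 = O(\ln\ln n)$. Moreover, for sufficiently large $n$, with probability $1-o(1)$ the subgraph induced by the set of vertices informed at round $T_0$ is a tree.
   Context: Configuration model: with $V_n=\{1,\dots,n\}$ and clone set $V_n\times[d]$, choose a perfect matching of the clones uniformly at random; projecting each matched pair $\{(u,i),(v,j)\}$ to an edge $uv$ gives a $d$-regular multigraph (loops and multiple edges allowed) denoted $\widetilde{\mathbb{G}}(n,d)$. Push model: initially only vertex 1 is informed; in each round each informed vertex independently chooses one of its $d$ clones uniformly at random and informs the vertex owning the clone matched to it. Probabilities are over both the matching and the protocol. A tree here means the induced multigraph is connected with no cycles, loops or multiple edges. *)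

theory Defs
  imports "HOL-Probability.Probability"
begin

definition clones :: "nat \<Rightarrow> nat \<Rightarrow> (nat \<times> nat) set" where
  "clones n d = {1..n} \<times> {..<d}"

text \<open>Perfect matchings of the clone set, as fixed-point-free involutions on the
  clone set (extended by the identity outside, so the set is finite).\<close>
definition perfect_matchings :: "nat \<Rightarrow> nat \<Rightarrow> ((nat \<times> nat) \<Rightarrow> (nat \<times> nat)) set" where
  "perfect_matchings n d =
     {m. (\<forall>x\<in>clones n d. m x \<in> clones n d \<and> m x \<noteq> x \<and> m (m x) = x)
       \<and> (\<forall>x. x \<notin> clones n d \<longrightarrow> m x = x)}"

definition config_pmf :: "nat \<Rightarrow> nat \<Rightarrow> ((nat \<times> nat) \<Rightarrow> (nat \<times> nat)) pmf" where
  "config_pmf n d = pmf_of_set (perfect_matchings n d)"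

text \<open>Protocol randomness for one round: every vertex picks a uniformly random clone
  index independently (only the choices of informed vertices are used).\<close>
definition choice_pmf :: "nat \<Rightarrow> nat \<Rightarrow> (nat \<Rightarrow> nat) pmf" where
  "choice_pmf n d = Pi_pmf {1..n} 0 (\<lambda>_. pmf_of_set {..<d})"

definition push_space :: "nat \<Rightarrow> nat \<Rightarrow>
    (((nat \<times> nat) \<Rightarrow> (nat \<times> nat)) \<times> (nat \<Rightarrow> nat) stream) measure" where
  "push_space n d = measure_pmf (config_pmf n d) \<Otimes>\<^sub>M stream_space (measure_pmf (choice_pmf n d))"

primrec informed :: "((nat \<times> nat) \<Rightarrow> (nat \<times> nat)) \<Rightarrow> (nat \<Rightarrow> nat) stream \<Rightarrow> nat \<Rightarrow> nat set" where
  "informed m \<omega> 0 = {1}"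
| "informed m \<omega> (Suc t) =
     informed m \<omega> t \<union> (\<lambda>v. fst (m (v, (\<omega> !! t) v))) ` informed m \<omega> t"

definition is_T0 :: "nat \<Rightarrow> ((nat \<times> nat) \<Rightarrow> (nat \<times> nat)) \<Rightarrow> (nat \<Rightarrow> nat) stream \<Rightarrow> nat \<Rightarrow> bool" where
  "is_T0 n m \<omega> t \<longleftrightarrow>
     real (card (informed m \<omega> t)) > (ln (real n)) ^ 7 \<and>
     (\<forall>s<t. \<not> real (card (informed m \<omega> s)) > (ln (real n)) ^ 7)"

definition has_loop :: "nat \<Rightarrow> ((nat \<times> nat) \<Rightarrow> (nat \<times> nat)) \<Rightarrow> nat set \<Rightarrow> bool" where
  "has_loop d m S \<longleftrightarrow> (\<exists>u\<in>S. \<exists>i<d. fst (m (u, i)) = u)"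

definition edge_mult :: "nat \<Rightarrow> ((nat \<times> nat) \<Rightarrow> (nat \<times> nat)) \<Rightarrow> nat \<Rightarrow> nat \<Rightarrow> nat" where
  "edge_mult d m u v = card {(i, j). i < d \<and> j < d \<and> m (u, i) = (v, j)}"

definition has_multi_edge :: "nat \<Rightarrow> ((nat \<times> nat) \<Rightarrow> (nat \<times> nat)) \<Rightarrow> nat set \<Rightarrow> bool" where
  "has_multi_edge d m S \<longleftrightarrow> (\<exists>u\<in>S. \<exists>v\<in>S. u \<noteq> v \<and> edge_mult d m u v \<ge> 2)"

definition adj :: "nat \<Rightarrow> ((nat \<times> nat) \<Rightarrow> (nat \<times> nat)) \<Rightarrow> nat set \<Rightarrow> nat \<Rightarrow> nat \<Rightarrow> bool" where
  "adj d m S u v \<longleftrightarrow> u \<in> S \<and> v \<in> S \<and> u \<noteq> v \<and> (\<exists>i<d. \<exists>j<d. m (u, i) = (v, j))"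

definition connected_induced :: "nat \<Rightarrow> ((nat \<times> nat) \<Rightarrow> (nat \<times> nat)) \<Rightarrow> nat set \<Rightarrow> bool" where
  "connected_induced d m S \<longleftrightarrow> (\<forall>u\<in>S. \<forall>v\<in>S. (adj d m S)\<^sup>*\<^sup>* u v)"

definition has_cycle :: "nat \<Rightarrow> ((nat \<times> nat) \<Rightarrow> (nat \<times> nat)) \<Rightarrow> nat set \<Rightarrow> bool" where
  "has_cycle d m S \<longleftrightarrow> (\<exists>xs. distinct xs \<and> length xs \<ge> 3 \<and> set xs \<subseteq> S \<and>
      (\<forall>i < length xs - 1. adj d m S (xs ! i) (xs ! Suc i)) \<and> adj d m S (last xs) (hd xs))"

definition is_tree :: "nat \<Rightarrow> ((nat \<times> nat) \<Rightarrow> (nat \<times> nat)) \<Rightarrow> nat set \<Rightarrow> bool" where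
  "is_tree d m S \<longleftrightarrow> connected_induced d m S \<and> \<not> has_cycle d m S \<and>
     \<not> has_loop d m S \<and> \<not> has_multi_edge d m S"

definition push_prob :: "nat \<Rightarrow> nat \<Rightarrow>
    (((nat \<times> nat) \<Rightarrow> (nat \<times> nat)) \<Rightarrow> (nat \<Rightarrow> nat) stream \<Rightarrow> bool) \<Rightarrow> real" where
  "push_prob n d P = measure (push_space n d) {x \<in> space (push_space n d). P (fst x) (snd x)}"

end

theory Submission
  imports Defs
begin

text \<open>
  Call a matching locally tree-like if no non-backtracking walk from vertex 1 of length at most
  2K+1 through distinct vertices returns to one of its own vertices. A union bound over the
  possible walks, each of which prescribes at most 2K+1 pairs of the matching, shows that this
  fails with probability O(K^2 (2d)^(2K+2) / n). On a locally tree-like matching the informed set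
  after t \<le> K rounds carries a spanning tree of depth at most t, so it induces a tree, vertices
  pushing outside have distinct targets, and since the tree uses only 2(|S|-1) of the d|S| \<ge> 3|S|
  clones of S internally, at least |S| of them lead outside. Hence E[1/|S(t+1)|] \<le> (1 - 1/(2d)) E[1/|S(t)|], and Markov's inequality bounds the
  probability that |S(K)| \<le> ln^7 n by ln^7 n (1 - 1/(2d))^K. For K = \<lfloor>16 d ln ln n\<rfloor> both
  error terms vanish, and on the remaining event T0 \<le> K while the informed set is still a tree.
\<close>

section \<open>Uniformly random perfect matchings\<close>

definition matchings_on :: "'a set \<Rightarrow> ('a \<Rightarrow> 'a) set" where
  "matchings_on A = {m. (\<forall>x\<in>A. m x \<in> A \<and> m x \<noteq> x \<and> m (m x) = x) \<and> (\<forall>x. x \<notin> A \<longrightarrow> m x = x)}"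

lemma perfect_matchings_eq: "perfect_matchings n d = matchings_on (clones n d)"
  unfolding perfect_matchings_def matchings_on_def by simp

lemma finite_matchings_on:
  assumes "finite A" shows "finite (matchings_on A)"
proof -
  have "inj_on (\<lambda>m. restrict m A) (matchings_on A)"
  proof (rule inj_onI)
    fix m m' assume "m \<in> matchings_on A" "m' \<in> matchings_on A" "restrict m A = restrict m' A"
    then show "m = m'"
    proof (intro ext)
      fix z assume a: "m \<in> matchings_on A" "m' \<in> matchings_on A" "restrict m A = restrict m' A"
      show "m z = m' z"
      proof (cases "z \<in> A")
        case True
        then show ?thesis using fun_cong[OF a(3), of z] by simp
      next
        case False
        then show ?thesis using a unfolding matchings_on_def by auto
      qed
    qed
  qed
  moreover have "(\<lambda>m. restrict m A) ` matchings_on A \<subseteq> PiE A (\<lambda>_. A)"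
    unfolding matchings_on_def by auto
  moreover have "finite (PiE A (\<lambda>_. A))" using assms by (simp add: finite_PiE)
  ultimately show ?thesis by (meson finite_imageD finite_subset)
qed

lemma matchings_on_fix_pair_bij:
  assumes xA: "x \<in> A" and yA: "y \<in> A" and xy: "x \<noteq> y"
    and Q1: "\<And>m. Q (m(x:=x, y:=y)) = Q m" and Q2: "\<And>m. Q (m(x:=y, y:=x)) = Q m"
  shows "bij_betw (\<lambda>m. m(x:=x, y:=y)) {m\<in>matchings_on A. m x = y \<and> Q m} {m\<in>matchings_on (A - {x,y}). Q m}"
proof (rule bij_betw_byWitness[where f' = "\<lambda>m. m(x:=y, y:=x)"])
  show "\<forall>a\<in>{m \<in> matchings_on A. m x = y \<and> Q m}. a(x := x, y := y, x := y, y := x) = a"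
  proof
    fix m assume m: "m \<in> {m \<in> matchings_on A. m x = y \<and> Q m}"
    then have "m y = x" using xA unfolding matchings_on_def by auto
    with m show "m(x := x, y := y, x := y, y := x) = m" by (auto simp: fun_eq_iff)
  qed
  show "\<forall>a'\<in>{m \<in> matchings_on (A - {x, y}). Q m}. a'(x := y, y := x, x := x, y := y) = a'"
    by (auto simp: fun_eq_iff matchings_on_def)
  show "(\<lambda>m. m(x := x, y := y)) ` {m \<in> matchings_on A. m x = y \<and> Q m} \<subseteq> {m \<in> matchings_on (A - {x, y}). Q m}"
  proof (rule image_subsetI)
    fix m assume "m \<in> {m \<in> matchings_on A. m x = y \<and> Q m}"
    then have m: "m \<in> matchings_on A" "m x = y" "Q m" by auto
    then have my: "m y = x" using xA unfolding matchings_on_def by auto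
    have "Q (m(x := x, y := y))" using m Q1 by simp
    moreover have "m(x := x, y := y) \<in> matchings_on (A - {x, y})"
      unfolding matchings_on_def
    proof (intro CollectI conjI ballI allI impI)
      fix z assume z: "z \<in> A - {x,y}"
      then have mz: "m z \<in> A" "m z \<noteq> z" "m (m z) = z" using m unfolding matchings_on_def by auto
      have "m z \<noteq> x" using m(2) z mz(3) by force
      moreover have "m z \<noteq> y" using my z mz(3) by force
      ultimately show "(m(x := x, y := y)) z \<in> A - {x, y}" "(m(x := x, y := y)) z \<noteq> z"
        "(m(x := x, y := y)) ((m(x := x, y := y)) z) = z" using z mz by auto
    next
      fix z assume "z \<notin> A - {x,y}"
      then show "(m(x := x, y := y)) z = z" using m unfolding matchings_on_def by auto
    qed
    ultimately show "m(x := x, y := y) \<in> {m \<in> matchings_on (A - {x, y}). Q m}" by simp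
  qed
  show "(\<lambda>m. m(x := y, y := x)) ` {m \<in> matchings_on (A - {x, y}). Q m} \<subseteq> {m \<in> matchings_on A. m x = y \<and> Q m}"
  proof (rule image_subsetI)
    fix m assume "m \<in> {m \<in> matchings_on (A - {x, y}). Q m}"
    then have m: "m \<in> matchings_on (A - {x,y})" "Q m" by auto
    have "Q (m(x := y, y := x))" using m Q2 by simp
    moreover have "m(x := y, y := x) \<in> matchings_on A"
      unfolding matchings_on_def
    proof (intro CollectI conjI ballI allI impI)
      fix z assume z: "z \<in> A"
      show "(m(x := y, y := x)) z \<in> A" "(m(x := y, y := x)) z \<noteq> z"
        "(m(x := y, y := x)) ((m(x := y, y := x)) z) = z"
        using z m(1) xy xA yA unfolding matchings_on_def by (auto split: if_splits)
    next
      fix z assume "z \<notin> A"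
      then show "(m(x := y, y := x)) z = z" using m xA yA unfolding matchings_on_def by auto
    qed
    ultimately show "m(x := y, y := x) \<in> {m \<in> matchings_on A. m x = y \<and> Q m}" using xy by simp
  qed
qed

fun matching_count :: "nat \<Rightarrow> nat" where
  "matching_count 0 = 1"
| "matching_count (Suc 0) = 0"
| "matching_count (Suc (Suc k)) = Suc k * matching_count k"

lemma card_matchings_on: "finite A \<Longrightarrow> card (matchings_on A) = matching_count (card A)"
proof (induction "card A" arbitrary: A rule: less_induct)
  case less
  show ?case
  proof (cases "A = {}")
    case True
    then have "matchings_on A = {id}" unfolding matchings_on_def by (auto simp: fun_eq_iff)
    then show ?thesis using True by simp
  next
    case False
    then obtain x where xA: "x \<in> A" by auto
    have split: "matchings_on A = (\<Union>y\<in>A - {x}. {m\<in>matchings_on A. m x = y \<and> True})"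
      using xA unfolding matchings_on_def by auto
    have each: "card {m\<in>matchings_on A. m x = y \<and> True} = matching_count (card A - 2)" if y: "y \<in> A - {x}" for y
    proof -
      have xny: "x \<noteq> y" using y by auto
      have c: "card (A - {x,y}) = card A - 2" using xA y less.prems xny
        by (simp add: card_Diff_subset card_insert_if numeral_2_eq_2)
      have lt: "card (A - {x,y}) < card A" using c xA less.prems
        by (metis card_gt_0_iff diff_less empty_iff zero_less_numeral)
      have "card {m\<in>matchings_on A. m x = y \<and> True} = card {m\<in>matchings_on (A - {x,y}). True}"
        using matchings_on_fix_pair_bij[of x A y "\<lambda>_. True"] xA y by (intro bij_betw_same_card) auto
      also have "\<dots> = matching_count (card (A - {x,y}))"
        using less.hyps[OF lt] less.prems by simp
      finally show ?thesis using c by simp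
    qed
    have "card (matchings_on A) = (\<Sum>y\<in>A - {x}. card {m\<in>matchings_on A. m x = y \<and> True})"
      apply (subst split)
      apply (rule card_UN_disjoint)
      using less.prems finite_matchings_on[OF less.prems] by auto
    also have "\<dots> = (card A - 1) * matching_count (card A - 2)"
      using each xA less.prems by simp
    also have "\<dots> = matching_count (card A)"
    proof -
      obtain k where k: "card A = Suc k" using False less.prems
        by (cases "card A") auto
      show ?thesis by (cases k) (simp_all add: k)
    qed
    finally show ?thesis .
  qed
qed

lemma matching_count_pos: "even k \<Longrightarrow> matching_count k > 0"
  by (induction k rule: matching_count.induct) auto

lemma matching_count_ge: "real (matching_count (M + 2 * k)) \<ge> real M ^ k * real (matching_count M)"
proof (induction k)
  case 0 then show ?case by simp
next
  case (Suc k)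
  have "matching_count (M + 2 * Suc k) = Suc (M + 2*k) * matching_count (M + 2 * k)"
    by (simp add: numeral_2_eq_2)
  then have "real (matching_count (M + 2 * Suc k)) = real (Suc (M + 2*k)) * real (matching_count (M + 2 * k))"
    by (metis of_nat_mult)
  also have "\<dots> \<ge> real M * (real M ^ k * real (matching_count M))"
    by (intro mult_mono Suc.IH) auto
  finally show ?case by (simp add: mult.assoc)
qed

definition pair_points :: "('a \<times> 'a) list \<Rightarrow> 'a list" where
  "pair_points ps = map fst ps @ map snd ps"

lemma card_matchings_on_containing:
  assumes "finite A" "distinct (pair_points ps)" "set (pair_points ps) \<subseteq> A"
  shows "card {m\<in>matchings_on A. \<forall>p\<in>set ps. m (fst p) = snd p} = card (matchings_on (A - set (pair_points ps)))"
  using assms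
proof (induction ps arbitrary: A)
  case Nil
  then show ?case by (simp add: pair_points_def)
next
  case (Cons p ps)
  obtain x y where p: "p = (x,y)" by (cases p)
  let ?Q = "\<lambda>m. \<forall>p\<in>set ps. m (fst p) = snd p"
  have xy: "x \<in> A" "y \<in> A" "x \<noteq> y" using Cons.prems p by (auto simp: pair_points_def)
  have nx: "x \<notin> set (pair_points ps)" "y \<notin> set (pair_points ps)"
    using Cons.prems p by (auto simp: pair_points_def)
  have Q1: "?Q (m(x:=x, y:=y)) = ?Q m" for m
  proof -
    have "\<forall>q\<in>set ps. fst q \<noteq> x \<and> fst q \<noteq> y" using nx by (auto simp: pair_points_def)
    then show ?thesis by auto
  qed
  have Q2: "?Q (m(x:=y, y:=x)) = ?Q m" for m
  proof -
    have "\<forall>q\<in>set ps. fst q \<noteq> x \<and> fst q \<noteq> y" using nx by (auto simp: pair_points_def)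
    then show ?thesis by auto
  qed
  have "{m\<in>matchings_on A. \<forall>q\<in>set (p#ps). m (fst q) = snd q} = {m\<in>matchings_on A. m x = y \<and> ?Q m}"
    using p by auto
  also have "card \<dots> = card {m\<in>matchings_on (A - {x,y}). ?Q m}"
    by (rule bij_betw_same_card[OF matchings_on_fix_pair_bij[OF xy Q1 Q2]])
  also have "\<dots> = card (matchings_on (A - {x,y} - set (pair_points ps)))"
    apply (rule Cons.IH)
    using Cons.prems p nx by (auto simp: pair_points_def)
  also have "A - {x,y} - set (pair_points ps) = A - set (pair_points (p#ps))"
    using p by (auto simp: pair_points_def)
  finally show ?case .
qed

lemma prob_matching_contains:
  assumes A: "finite A" "even (card A)" and ps: "distinct (pair_points ps)" "set (pair_points ps) \<subseteq> A"
    and k: "length ps = k" and lt: "2 * k < card A"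
  shows "measure_pmf.prob (pmf_of_set (matchings_on A)) {m. \<forall>p\<in>set ps. m (fst p) = snd p}
          \<le> 1 / (real (card A) - 2 * real k) ^ k"
proof -
  have ne: "matchings_on A \<noteq> {}" using card_matchings_on[OF A(1)] matching_count_pos[OF A(2)]
    by (metis card.empty less_numeral_extra(3))
  have cps: "card (set (pair_points ps)) = 2 * k"
    using distinct_card[OF ps(1)] k by (simp add: pair_points_def)
  define M where "M = card A - 2 * k"
  have le: "2 * k \<le> card A" using ps cps A by (metis card_mono)
  have cardrest: "card (A - set (pair_points ps)) = M" unfolding M_def
    using cps ps A by (simp add: card_Diff_subset)
  have evM: "even M" using A le unfolding M_def by auto
  have cA: "card A = M + 2 * k" using le M_def by simp
  have "measure_pmf.prob (pmf_of_set (matchings_on A)) {m. \<forall>p\<in>set ps. m (fst p) = snd p}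
       = real (card {m\<in>matchings_on A. \<forall>p\<in>set ps. m (fst p) = snd p}) / real (card (matchings_on A))"
    using ne finite_matchings_on[OF A(1)]
    by (simp add: measure_pmf_of_set Int_def conj_commute)
  also have "\<dots> = real (matching_count M) / real (matching_count (M + 2 * k))"
    using card_matchings_on_containing[OF A(1) ps] card_matchings_on[OF A(1)] card_matchings_on[of "A - set (pair_points ps)"] A(1) cardrest cA by simp
  also have "\<dots> \<le> real (matching_count M) / (real M ^ k * real (matching_count M))"
  proof -
    have "M > 0" using lt M_def by simp
    then have pos: "0 < real M ^ k * real (matching_count M)" using matching_count_pos[OF evM] by simp
    show ?thesis
      apply (rule divide_left_mono) using matching_count_ge[of M k] pos by (auto intro: mult_pos_pos)
  qed
  also have "\<dots> = 1 / real M ^ k" using matching_count_pos[OF evM] by simp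
  also have "real M = real (card A) - 2 * real k" using le M_def by simp
  finally show ?thesis .
qed

section \<open>Short closing walks from the root\<close>

type_synonym clone_map = "nat \<times> nat \<Rightarrow> nat \<times> nat"

text \<open>A walk is recorded as the list of clones through which it leaves its successive vertices;
  it is non-backtracking if it never leaves a vertex through the clone it arrived by.\<close>

fun nb_walk :: "clone_map \<Rightarrow> (nat \<times> nat) list \<Rightarrow> bool" where
  "nb_walk m [] = True"
| "nb_walk m [x] = True"
| "nb_walk m (x # y # zs) = (fst y = fst (m x) \<and> y \<noteq> m x \<and> nb_walk m (y # zs))"

lemma nb_walk_append:
  "nb_walk m (xs @ ys) \<longleftrightarrow> nb_walk m xs \<and> nb_walk m ys \<and>
     (xs \<noteq> [] \<and> ys \<noteq> [] \<longrightarrow> fst (hd ys) = fst (m (last xs)) \<and> hd ys \<noteq> m (last xs))"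
proof (induction xs)
  case Nil then show ?case by simp
next
  case (Cons x xs)
  show ?case
  proof (cases xs)
    case Nil
    then show ?thesis by (cases ys) auto
  next
    case (Cons y zs)
    then show ?thesis using Cons.IH by auto
  qed
qed

definition closing_walk :: "nat \<Rightarrow> nat \<Rightarrow> clone_map \<Rightarrow> (nat \<times> nat) list \<Rightarrow> bool" where
  "closing_walk n d m xs \<longleftrightarrow> xs \<noteq> [] \<and> fst (hd xs) = 1 \<and> nb_walk m xs \<and> distinct (map fst xs) \<and>
     fst (m (last xs)) \<in> fst ` set xs \<and> set xs \<subseteq> clones n d"

definition locally_treelike :: "nat \<Rightarrow> nat \<Rightarrow> nat \<Rightarrow> clone_map \<Rightarrow> bool" where
  "locally_treelike n d K m \<longleftrightarrow> \<not> (\<exists>xs. closing_walk n d m xs \<and> length xs \<le> 2 * K + 1)"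

fun linked_pairs :: "((nat \<times> nat) \<times> (nat \<times> nat)) list \<Rightarrow> bool" where
  "linked_pairs [] = True"
| "linked_pairs [p] = True"
| "linked_pairs (p # q # r) = (fst (fst q) = fst (snd p) \<and> linked_pairs (q # r))"

lemma linked_pairs_snoc:
  "linked_pairs (ps @ [q]) \<longleftrightarrow> linked_pairs ps \<and> (ps \<noteq> [] \<longrightarrow> fst (fst q) = fst (snd (last ps)))"
proof (induction ps rule: linked_pairs.induct)
  case 1 then show ?case by simp
next
  case (2 p) then show ?case by simp
next
  case (3 p q' r) then show ?case by auto
qed

text \<open>Walks described by the matched pairs they use, independently of any matching: these index
  the union bound over closing walks.\<close>

definition pair_walks :: "nat \<Rightarrow> nat \<Rightarrow> nat \<Rightarrow> ((nat \<times> nat) \<times> (nat \<times> nat)) list set" where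
  "pair_walks n d j = {ps. length ps = j \<and> (ps \<noteq> [] \<longrightarrow> fst (fst (hd ps)) = 1) \<and> linked_pairs ps \<and>
     (\<forall>p\<in>set ps. fst p \<in> clones n d \<and> snd p \<in> clones n d)}"

definition closing_pair_walks :: "nat \<Rightarrow> nat \<Rightarrow> nat \<Rightarrow> ((nat \<times> nat) \<times> (nat \<times> nat)) list set" where
  "closing_pair_walks n d k = {ps \<in> pair_walks n d k. ps \<noteq> [] \<and> fst (snd (last ps)) \<in> fst ` fst ` set ps}"

lemma finite_clones: "finite (clones n d)"
  unfolding clones_def by simp

lemma card_clones: "card (clones n d) = n * d"
  unfolding clones_def by (simp add: card_cartesian_product)

lemma finite_pair_walks: "finite (pair_walks n d j)"
proof -
  have "pair_walks n d j \<subseteq> {xs. set xs \<subseteq> clones n d \<times> clones n d \<and> length xs = j}"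
    unfolding pair_walks_def by (auto simp: mem_Times_iff)
  then show ?thesis
    by (rule finite_subset) (intro finite_lists_length_eq finite_cartesian_product finite_clones)
qed

definition end_vertex :: "((nat \<times> nat) \<times> (nat \<times> nat)) list \<Rightarrow> nat" where
  "end_vertex ps = (if ps = [] then 1 else fst (snd (last ps)))"

lemma butlast_pair_walks:
  assumes "ps \<in> pair_walks n d (Suc j)"
  shows "butlast ps \<in> pair_walks n d j" "ps = butlast ps @ [last ps]"
    "fst (fst (last ps)) = end_vertex (butlast ps)" "snd (fst (last ps)) < d" "snd (last ps) \<in> clones n d"
proof -
  have ne: "ps \<noteq> []" using assms unfolding pair_walks_def by auto
  show eq: "ps = butlast ps @ [last ps]" using ne by simp
  have pc: "linked_pairs (butlast ps @ [last ps])" using assms eq unfolding pair_walks_def by auto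
  have lastin: "last ps \<in> set ps" using ne by simp
  show "butlast ps \<in> pair_walks n d j"
    unfolding pair_walks_def
  proof (intro CollectI conjI impI ballI)
    show "length (butlast ps) = j" using assms unfolding pair_walks_def by simp
    show "linked_pairs (butlast ps)" using pc linked_pairs_snoc by blast
    fix p assume "p \<in> set (butlast ps)"
    then have "p \<in> set ps" by (meson in_set_butlastD)
    then show "fst p \<in> clones n d" "snd p \<in> clones n d" using assms unfolding pair_walks_def by auto
  next
    assume "butlast ps \<noteq> []"
    then have "hd (butlast ps) = hd ps" using eq by (metis hd_append2)
    then show "fst (fst (hd (butlast ps))) = 1" using assms ne unfolding pair_walks_def by auto
  qed
  show "fst (fst (last ps)) = end_vertex (butlast ps)"
  proof (cases "butlast ps = []")
    case True
    then have "last ps = hd ps" using eq by (metis append_Nil list.sel(1))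
    then show ?thesis using True assms ne unfolding pair_walks_def end_vertex_def by auto
  next
    case False
    then show ?thesis using pc linked_pairs_snoc[of "butlast ps" "last ps"] unfolding end_vertex_def by auto
  qed
  show "snd (fst (last ps)) < d" "snd (last ps) \<in> clones n d"
    using assms lastin unfolding pair_walks_def clones_def by auto
qed

lemma card_pair_walks: "card (pair_walks n d j) \<le> (d * (n * d)) ^ j"
proof (induction j)
  case 0
  have "pair_walks n d 0 = {[]}" unfolding pair_walks_def by auto
  then show ?case by simp
next
  case (Suc j)
  define g where "g = (\<lambda>(ps :: ((nat \<times> nat) \<times> (nat \<times> nat)) list, i :: nat, y :: nat \<times> nat).
     ps @ [((end_vertex ps, i), y)])"
  have "pair_walks n d (Suc j) \<subseteq> g ` (pair_walks n d j \<times> {..<d} \<times> clones n d)"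
  proof
    fix ps assume ps: "ps \<in> pair_walks n d (Suc j)"
    note b = butlast_pair_walks[OF ps]
    have "ps = g (butlast ps, snd (fst (last ps)), snd (last ps))"
      unfolding g_def using b(2,3) by (metis (no_types, lifting) case_prod_conv prod.collapse)
    then show "ps \<in> g ` (pair_walks n d j \<times> {..<d} \<times> clones n d)"
      using b by blast
  qed
  then have "card (pair_walks n d (Suc j)) \<le> card (g ` (pair_walks n d j \<times> {..<d} \<times> clones n d))"
    by (intro card_mono finite_imageI finite_cartesian_product finite_pair_walks finite_clones) auto
  also have "\<dots> \<le> card (pair_walks n d j \<times> {..<d} \<times> clones n d)"
    by (intro card_image_le finite_cartesian_product finite_pair_walks finite_clones) auto
  also have "\<dots> = card (pair_walks n d j) * (d * (n * d))"
    by (simp add: card_cartesian_product card_clones)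
  also have "\<dots> \<le> (d * (n * d)) ^ j * (d * (n * d))"
    using Suc.IH by simp
  finally show ?case by (simp add: mult.commute)
qed

lemma card_closing_pair_walks: "card (closing_pair_walks n d (Suc j)) \<le> (d * (n * d)) ^ j * (d * Suc j * d)"
proof -
  define h where "h = (\<lambda>(ps :: ((nat \<times> nat) \<times> (nat \<times> nat)) list, i :: nat, a :: nat, c :: nat).
     ps @ [((end_vertex ps, i), (fst ((map fst ps @ [(end_vertex ps, i)]) ! a), c))])"
  have "closing_pair_walks n d (Suc j) \<subseteq> h ` (pair_walks n d j \<times> {..<d} \<times> {..<Suc j} \<times> {..<d})"
  proof
    fix ps assume ps: "ps \<in> closing_pair_walks n d (Suc j)"
    then have psP: "ps \<in> pair_walks n d (Suc j)" unfolding closing_pair_walks_def by auto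
    note b = butlast_pair_walks[OF psP]
    have "fst (snd (last ps)) \<in> fst ` fst ` set ps" using ps unfolding closing_pair_walks_def by auto
    then have "fst (snd (last ps)) \<in> set (map fst (map fst ps))" by (simp only: set_map)
    then obtain a where a: "a < length ps" "fst (snd (last ps)) = fst (map fst ps ! a)"
      by (auto simp: in_set_conv_nth)
    have len: "length ps = Suc j" using psP unfolding pair_walks_def by simp
    have mf: "map fst ps = map fst (butlast ps) @ [(end_vertex (butlast ps), snd (fst (last ps)))]"
      using b(2,3) by (metis list.simps(8,9) map_append prod.collapse)
    have sc: "snd (last ps) = (fst ((map fst (butlast ps) @ [(end_vertex (butlast ps), snd (fst (last ps)))]) ! a), snd (snd (last ps)))"
      using a mf by (metis prod.collapse)
    have "snd (snd (last ps)) < d" using b(5) unfolding clones_def by auto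
    moreover have "ps = h (butlast ps, snd (fst (last ps)), a, snd (snd (last ps)))"
      unfolding h_def using b(2,3) sc by (metis (no_types, lifting) case_prod_conv prod.collapse)
    ultimately show "ps \<in> h ` (pair_walks n d j \<times> {..<d} \<times> {..<Suc j} \<times> {..<d})"
      using b a len by force
  qed
  then have "card (closing_pair_walks n d (Suc j)) \<le> card (h ` (pair_walks n d j \<times> {..<d} \<times> {..<Suc j} \<times> {..<d}))"
    by (intro card_mono finite_imageI finite_cartesian_product finite_pair_walks) auto
  also have "\<dots> \<le> card (pair_walks n d j \<times> {..<d} \<times> {..<Suc j} \<times> {..<d})"
    by (intro card_image_le finite_cartesian_product finite_pair_walks) auto
  also have "\<dots> = card (pair_walks n d j) * (d * Suc j * d)"
    by (simp add: card_cartesian_product)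
  also have "\<dots> \<le> (d * (n * d)) ^ j * (d * Suc j * d)"
    using card_pair_walks by simp
  finally show ?thesis .
qed

lemma nb_walk_nth:
  "nb_walk m xs \<Longrightarrow> Suc i < length xs \<Longrightarrow> fst (xs ! Suc i) = fst (m (xs ! i)) \<and> xs ! Suc i \<noteq> m (xs ! i)"
proof (induction m xs arbitrary: i rule: nb_walk.induct)
  case (3 m x y zs)
  then show ?case by (cases i) auto
qed auto

lemma nb_walk_linked_pairs: "nb_walk m xs \<Longrightarrow> linked_pairs (map (\<lambda>x. (x, m x)) xs)"
  by (induction m xs rule: nb_walk.induct) auto

lemma matchings_on_inj: "m \<in> matchings_on A \<Longrightarrow> inj_on m A"
proof (rule inj_onI)
  fix x y assume "m \<in> matchings_on A" "x \<in> A" "y \<in> A" "m x = m y"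
  then have a: "\<forall>z\<in>A. m (m z) = z" unfolding matchings_on_def by blast
  have "x = m (m x)" using a \<open>x \<in> A\<close> by simp
  also have "\<dots> = m (m y)" using \<open>m x = m y\<close> by simp
  also have "\<dots> = y" using a \<open>y \<in> A\<close> by simp
  finally show "x = y" .
qed

lemma nb_walk_matched_notin:
  assumes m: "m \<in> matchings_on A" and ch: "nb_walk m xs" and dv: "distinct (map fst xs)"
    and cl: "set xs \<subseteq> A" and x: "x \<in> set xs"
  shows "m x \<notin> set xs"
proof
  assume "m x \<in> set xs"
  then obtain s t where st: "s < length xs" "t < length xs" "x = xs ! s" "m (xs ! s) = xs ! t"
    using x by (metis in_set_conv_nth)
  have inv: "m (m y) = y" "m y \<noteq> y" if "y \<in> set xs" for y
    using m cl that unfolding matchings_on_def by auto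
  have no_forward: False if "Suc a < length xs" "m (xs ! a) = xs ! b" "b < length xs" for a b
  proof -
    have c: "fst (xs ! Suc a) = fst (m (xs ! a))" "xs ! Suc a \<noteq> m (xs ! a)"
      using nb_walk_nth[OF ch that(1)] by auto
    then have "map fst xs ! Suc a = map fst xs ! b" using that by simp
    then have "Suc a = b" using dv that nth_eq_iff_index_eq[of "map fst xs" "Suc a" b] by simp
    then show False using c that by simp
  qed
  have back_edge: "m (xs ! t) = xs ! s" using st inv(1)[of "xs ! s"] by simp
  show False
  proof (cases "Suc s < length xs \<or> Suc t < length xs")
    case True
    then show False using no_forward st back_edge by blast
  next
    case False
    then have "s = t" using st by simp
    then show False using st inv(2)[of "xs ! s"] by simp
  qed
qed

lemma closing_walk_pairs:
  assumes m: "m \<in> matchings_on (clones n d)" and bw: "closing_walk n d m xs"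
  defines "ps \<equiv> map (\<lambda>x. (x, m x)) xs"
  shows "ps \<in> closing_pair_walks n d (length xs)" "distinct (pair_points ps)" "\<forall>p\<in>set ps. m (fst p) = snd p"
proof -
  have ne: "xs \<noteq> []" and h1: "fst (hd xs) = 1" and ch: "nb_walk m xs" and dv: "distinct (map fst xs)"
    and fin: "fst (m (last xs)) \<in> fst ` set xs" and cl: "set xs \<subseteq> clones n d"
    using bw unfolding closing_walk_def by auto
  have matched_clone: "m x \<in> clones n d" if "x \<in> clones n d" for x
    using m that unfolding matchings_on_def by auto
  show "\<forall>p\<in>set ps. m (fst p) = snd p" unfolding ps_def by auto
  show "ps \<in> closing_pair_walks n d (length xs)"
    unfolding closing_pair_walks_def pair_walks_def ps_def
  proof (intro CollectI conjI impI ballI)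
    show "linked_pairs (map (\<lambda>x. (x, m x)) xs)" using nb_walk_linked_pairs[OF ch] .
    show "fst (fst (hd (map (\<lambda>x. (x, m x)) xs))) = 1" using ne h1 by (simp add: hd_map)
    show "fst (snd (last (map (\<lambda>x. (x, m x)) xs))) \<in> fst ` fst ` set (map (\<lambda>x. (x, m x)) xs)"
      using fin ne by (simp add: last_map image_image)
  qed (use ne cl matched_clone in auto)
  have "distinct xs" using dv by (simp add: distinct_map)
  moreover have "inj_on m (set xs)" using matchings_on_inj[OF m] cl by (meson inj_on_subset)
  moreover have "set xs \<inter> m ` set xs = {}"
    using nb_walk_matched_notin[OF m ch dv cl] by blast
  ultimately show "distinct (pair_points ps)"
    unfolding pair_points_def ps_def by (simp add: o_def distinct_map)
qed

lemma set_config_pmf: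
  assumes "even (n * d)"
  shows "set_pmf (config_pmf n d) = matchings_on (clones n d)" "finite (matchings_on (clones n d))" "matchings_on (clones n d) \<noteq> {}"
proof -
  show f: "finite (matchings_on (clones n d))" by (rule finite_matchings_on[OF finite_clones])
  show ne: "matchings_on (clones n d) \<noteq> {}"
    using card_matchings_on[OF finite_clones, of n d] matching_count_pos[of "n * d"] assms card_clones[of n d]
    by (metis card.empty less_numeral_extra(3))
  show "set_pmf (config_pmf n d) = matchings_on (clones n d)"
    unfolding config_pmf_def perfect_matchings_eq using f ne by simp
qed

lemma prob_not_locally_treelike:
  assumes ev: "even (n * d)" and big: "2 * (2 * K + 1) < n * d"
  shows "measure_pmf.prob (config_pmf n d) {m. \<not> locally_treelike n d K m}
     \<le> (\<Sum>k\<in>{1..2*K+1}. real (card (closing_pair_walks n d k)) / (real (n * d) - 2 * real k) ^ k)"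
proof -
  note cs = set_config_pmf[OF ev]
  define E where "E = (\<lambda>ps :: ((nat \<times> nat) \<times> (nat \<times> nat)) list. {m. \<forall>p\<in>set ps. m (fst p) = snd p})"
  define D where "D = (\<lambda>k. {ps \<in> closing_pair_walks n d k. distinct (pair_points ps)})"
  have sub: "{m. \<not> locally_treelike n d K m} \<inter> set_pmf (config_pmf n d) \<subseteq> (\<Union>k\<in>{1..2*K+1}. \<Union>ps\<in>D k. E ps)"
  proof
    fix m assume "m \<in> {m. \<not> locally_treelike n d K m} \<inter> set_pmf (config_pmf n d)"
    then have m: "m \<in> matchings_on (clones n d)" and ng: "\<not> locally_treelike n d K m" using cs by auto
    then obtain xs where xs: "closing_walk n d m xs" "length xs \<le> 2 * K + 1" unfolding locally_treelike_def by auto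
    have "length xs \<ge> 1" using xs unfolding closing_walk_def by (cases xs) auto
    moreover have "map (\<lambda>x. (x, m x)) xs \<in> D (length xs)"
      using closing_walk_pairs[OF m xs(1)] unfolding D_def by auto
    moreover have "m \<in> E (map (\<lambda>x. (x, m x)) xs)"
      using closing_walk_pairs[OF m xs(1)] unfolding E_def by auto
    ultimately show "m \<in> (\<Union>k\<in>{1..2*K+1}. \<Union>ps\<in>D k. E ps)"
      using xs(2) by auto
  qed
  have finD: "finite (D k)" for k
    unfolding D_def closing_pair_walks_def using finite_pair_walks by simp
  have "measure_pmf.prob (config_pmf n d) {m. \<not> locally_treelike n d K m}
      = measure_pmf.prob (config_pmf n d) ({m. \<not> locally_treelike n d K m} \<inter> set_pmf (config_pmf n d))"
    by (simp add: measure_Int_set_pmf)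
  also have "\<dots> \<le> measure_pmf.prob (config_pmf n d) (\<Union>k\<in>{1..2*K+1}. \<Union>ps\<in>D k. E ps)"
    by (intro measure_pmf.finite_measure_mono sub) auto
  also have "\<dots> \<le> (\<Sum>k\<in>{1..2*K+1}. measure_pmf.prob (config_pmf n d) (\<Union>ps\<in>D k. E ps))"
    by (intro measure_UNION_le) auto
  also have "\<dots> \<le> (\<Sum>k\<in>{1..2*K+1}. \<Sum>ps\<in>D k. measure_pmf.prob (config_pmf n d) (E ps))"
    by (intro sum_mono measure_UNION_le finD) auto
  also have "\<dots> \<le> (\<Sum>k\<in>{1..2*K+1}. \<Sum>ps\<in>D k. 1 / (real (n * d) - 2 * real k) ^ k)"
  proof (intro sum_mono)
    fix k ps assume k: "k \<in> {1..2*K+1}" and ps: "ps \<in> D k"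
    have l: "length ps = k" using ps unfolding D_def closing_pair_walks_def pair_walks_def by auto
    have sub: "set (pair_points ps) \<subseteq> clones n d"
      using ps unfolding D_def closing_pair_walks_def pair_walks_def pair_points_def by auto
    show "measure_pmf.prob (config_pmf n d) (E ps) \<le> 1 / (real (n * d) - 2 * real k) ^ k"
      using prob_matching_contains[OF finite_clones, of n d ps k] ev sub l k big ps
      unfolding E_def config_pmf_def perfect_matchings_eq D_def card_clones by auto
  qed
  also have "\<dots> = (\<Sum>k\<in>{1..2*K+1}. real (card (D k)) / (real (n * d) - 2 * real k) ^ k)"
    by simp
  also have "\<dots> \<le> (\<Sum>k\<in>{1..2*K+1}. real (card (closing_pair_walks n d k)) / (real (n * d) - 2 * real k) ^ k)"
  proof (intro sum_mono divide_right_mono)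
    fix k assume k: "k \<in> {1..2*K+1}"
    show "real (card (D k)) \<le> real (card (closing_pair_walks n d k))"
      unfolding D_def using finite_pair_walks[of n d k] unfolding closing_pair_walks_def
      by (intro of_nat_mono card_mono) auto
    show "0 \<le> (real (n * d) - 2 * real k) ^ k" using k big
      by (intro zero_le_power) (auto simp del: of_nat_mult)
  qed
  finally show ?thesis .
qed

lemma closing_pair_walks_term_le:
  assumes k: "k \<ge> 1" and N: "N = n * d" and kN: "4 * k \<le> N" and d1: "d \<ge> 1"
  shows "real (card (closing_pair_walks n d k)) / (real N - 2 * real k) ^ k \<le> real k * (2 * real d) ^ (k + 1) / real N"
proof -
  obtain j where j: "k = Suc j" using k by (cases k) auto
  have c: "real (card (closing_pair_walks n d k)) \<le> (real d * real N) ^ j * (real d * real k * real d)"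
  proof -
    have "card (closing_pair_walks n d k) \<le> (d * (n * d)) ^ j * (d * Suc j * d)" using card_closing_pair_walks[of n d j] j by simp
    then have "real (card (closing_pair_walks n d k)) \<le> real ((d * (n * d)) ^ j * (d * Suc j * d))" by (rule of_nat_mono)
    then show ?thesis using N j by (simp add: algebra_simps)
  qed
  have Npos: "real N > 0" using kN k by simp
  have half: "real N - 2 * real k \<ge> real N / 2" using kN by simp
  have den: "(real N - 2 * real k) ^ k \<ge> (real N / 2) ^ k"
    using half Npos by (intro power_mono) auto
  have dpos: "(real N / 2) ^ k > 0" using Npos by simp
  have "real (card (closing_pair_walks n d k)) / (real N - 2 * real k) ^ k \<le> (real d * real N) ^ j * (real d * real k * real d) / (real N / 2) ^ k"
    using c den dpos by (intro frac_le) auto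
  also have "\<dots> = real k * real d ^ (k + 1) * 2 ^ k / real N"
    using Npos j by (simp add: field_simps power_mult_distrib)
  also have "\<dots> \<le> real k * (2 * real d) ^ (k + 1) / real N"
  proof -
    have "real d ^ (k + 1) * 2 ^ k \<le> (2 * real d) ^ (k + 1)"
      by (simp add: power_mult_distrib)
    then show ?thesis using Npos by (intro divide_right_mono) (auto intro: mult_left_mono simp: mult.assoc)
  qed
  finally show ?thesis .
qed

lemma closing_pair_walks_sum_le:
  assumes N: "N = n * d" and MN: "4 * M \<le> N" and d1: "d \<ge> 1"
  shows "(\<Sum>k\<in>{1..M}. real (card (closing_pair_walks n d k)) / (real N - 2 * real k) ^ k)
         \<le> real M ^ 2 * (2 * real d) ^ (M + 1) / real N"
proof -
  have "(\<Sum>k\<in>{1..M}. real (card (closing_pair_walks n d k)) / (real N - 2 * real k) ^ k)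
      \<le> (\<Sum>k\<in>{1..M}. real M * (2 * real d) ^ (M + 1) / real N)"
  proof (intro sum_mono)
    fix k assume k: "k \<in> {1..M}"
    have "real (card (closing_pair_walks n d k)) / (real N - 2 * real k) ^ k \<le> real k * (2 * real d) ^ (k + 1) / real N"
      by (rule closing_pair_walks_term_le) (use k N MN d1 in auto)
    also have "\<dots> \<le> real M * (2 * real d) ^ (M + 1) / real N"
      using k d1 by (intro divide_right_mono mult_mono power_increasing) auto
    finally show "real (card (closing_pair_walks n d k)) / (real N - 2 * real k) ^ k \<le> real M * (2 * real d) ^ (M + 1) / real N" .
  qed
  also have "\<dots> = real M ^ 2 * (2 * real d) ^ (M + 1) / real N"
    by (simp add: power2_eq_square)
  finally show ?thesis .
qed

section \<open>Rooted spanning trees of the informed set\<close>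

definition rooted_tree_on ::
    "nat \<Rightarrow> nat \<Rightarrow> clone_map \<Rightarrow> nat set \<Rightarrow> nat \<Rightarrow> (nat \<Rightarrow> nat) \<Rightarrow> (nat \<Rightarrow> nat) \<Rightarrow> (nat \<Rightarrow> nat) \<Rightarrow> bool"
  where
  "rooted_tree_on n d m S B par pc dep \<longleftrightarrow>
     finite S \<and> 1 \<in> S \<and> S \<subseteq> {1..n} \<and> dep 1 = 0 \<and> (\<forall>w\<in>S. dep w \<le> B) \<and>
     (\<forall>w\<in>S - {1}. par w \<in> S \<and> pc w < d \<and> fst (m (w, pc w)) = par w \<and> dep (par w) < dep w)"

text \<open>The walk from the root down the tree to w, and the walk from a up the tree until its next
  step would enter V. The counter is fuel for termination; any bound on the depth suffices.\<close>

fun root_path :: "clone_map \<Rightarrow> (nat \<Rightarrow> nat) \<Rightarrow> (nat \<Rightarrow> nat) \<Rightarrow> nat \<Rightarrow> nat \<Rightarrow> (nat \<times> nat) list" where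
  "root_path m par pc 0 w = []"
| "root_path m par pc (Suc f) w = (if w = 1 then [] else root_path m par pc f (par w) @ [m (w, pc w)])"

fun climb :: "clone_map \<Rightarrow> (nat \<Rightarrow> nat) \<Rightarrow> (nat \<Rightarrow> nat) \<Rightarrow> nat set \<Rightarrow> nat \<Rightarrow> nat \<Rightarrow> (nat \<times> nat) list" where
  "climb m par pc V 0 a = []"
| "climb m par pc V (Suc f) a = (if par a \<in> V then [(a, pc a)] else (a, pc a) # climb m par pc V f (par a))"

locale rooted_tree =
  fixes n d :: nat and m :: clone_map and S :: "nat set" and B :: nat and par pc dep :: "nat \<Rightarrow> nat"
  assumes pm: "m \<in> matchings_on (clones n d)" and ti: "rooted_tree_on n d m S B par pc dep"
begin

lemma matched_clone: assumes "x \<in> clones n d" shows "m x \<in> clones n d" "m (m x) = x" "m x \<noteq> x"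
  using pm assms unfolding matchings_on_def by auto

lemma tree_basics: "finite S" "1 \<in> S" "S \<subseteq> {1..n}" "dep 1 = 0" "\<And>w. w \<in> S \<Longrightarrow> dep w \<le> B"
  using ti unfolding rooted_tree_on_def by auto

lemma parent_props: assumes "w \<in> S" "w \<noteq> 1"
  shows "par w \<in> S" "pc w < d" "fst (m (w, pc w)) = par w" "dep (par w) < dep w"
  using ti assms unfolding rooted_tree_on_def by auto

lemma clone_of_member: "w \<in> S \<Longrightarrow> i < d \<Longrightarrow> (w, i) \<in> clones n d"
  using tree_basics(3) unfolding clones_def by auto

lemma matched_parent: assumes "w \<in> S" "w \<noteq> 1" shows "m (w, pc w) = (par w, snd (m (w, pc w)))"
  using parent_props[OF assms] by (metis prod.collapse)

lemma parent_neq: assumes "w \<in> S" "w \<noteq> 1" shows "par w \<noteq> w"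
  using parent_props[OF assms] by auto

lemma parent_edges_distinct: assumes "w \<in> S" "w \<noteq> 1" "par w \<noteq> 1" shows "m (w, pc w) \<noteq> (par w, pc (par w))"
proof
  assume eq: "m (w, pc w) = (par w, pc (par w))"
  have "m (par w, pc (par w)) = (w, pc w)" using eq matched_clone(2)[OF clone_of_member[OF assms(1) parent_props(2)[OF assms(1,2)]]] by simp
  then have "par (par w) = w" using parent_props[OF parent_props(1)[OF assms(1,2)] assms(3)] by simp
  then show False using parent_props(4)[OF assms(1,2)] parent_props(4)[OF parent_props(1)[OF assms(1,2)] assms(3)] by simp
qed

lemma root_path_props:
  assumes "w \<in> S" "dep w \<le> f"
  shows "(w = 1 \<longrightarrow> root_path m par pc f w = []) \<and>
    (w \<noteq> 1 \<longrightarrow> root_path m par pc f w \<noteq> [] \<and> fst (hd (root_path m par pc f w)) = 1 \<and> last (root_path m par pc f w) = m (w, pc w)) \<and>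
    nb_walk m (root_path m par pc f w) \<and> distinct (map fst (root_path m par pc f w)) \<and>
    (\<forall>x\<in>set (root_path m par pc f w). fst x \<in> S \<and> dep (fst x) < dep w) \<and>
    length (root_path m par pc f w) \<le> dep w \<and> set (root_path m par pc f w) \<subseteq> clones n d"
  using assms
proof (induction f arbitrary: w)
  case 0
  then show ?case using parent_props(4)[of w] by (cases "w = 1") auto
next
  case (Suc f)
  show ?case
  proof (cases "w = 1")
    case True then show ?thesis by simp
  next
    case w1: False
    note tp = parent_props[OF Suc.prems(1) w1]
    have df: "dep (par w) \<le> f" using tp(4) Suc.prems by simp
    note IH = Suc.IH[OF tp(1) df]
    define U where "U = root_path m par pc f (par w)"
    have eq: "root_path m par pc (Suc f) w = U @ [m (w, pc w)]" using w1 U_def by simp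
    have wcl: "(w, pc w) \<in> clones n d" using clone_of_member[OF Suc.prems(1) tp(2)] .
    have ch: "nb_walk m (U @ [m (w, pc w)])"
    proof (cases "par w = 1")
      case True then show ?thesis using IH U_def by simp
    next
      case False
      have l: "last U = m (par w, pc (par w))" "U \<noteq> []" using IH False U_def by auto
      have pcl: "(par w, pc (par w)) \<in> clones n d" using clone_of_member[OF tp(1) parent_props(2)[OF tp(1) False]] .
      have "m (last U) = (par w, pc (par w))" using l matched_clone(2)[OF pcl] by simp
      moreover have "m (w, pc w) \<noteq> (par w, pc (par w))" using parent_edges_distinct[OF Suc.prems(1) w1 False] .
      ultimately show ?thesis using IH U_def tp(3) l by (simp add: nb_walk_append)
    qed
    have hd1: "fst (hd (U @ [m (w, pc w)])) = 1"
      using IH U_def tp(3) by (cases "par w = 1") auto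
    have dis: "distinct (map fst (U @ [m (w, pc w)]))"
    proof -
      have "par w \<notin> fst ` set U" using IH U_def by auto
      then show ?thesis using IH U_def tp(3) by simp
    qed
    have el: "\<forall>x\<in>set (U @ [m (w, pc w)]). fst x \<in> S \<and> dep (fst x) < dep w"
    proof
      fix x assume "x \<in> set (U @ [m (w, pc w)])"
      then consider "x \<in> set U" | "x = m (w, pc w)" by auto
      then show "fst x \<in> S \<and> dep (fst x) < dep w"
      proof cases
        case 1
        then have "fst x \<in> S" "dep (fst x) < dep (par w)" using IH U_def by auto
        then show ?thesis using tp(4) by simp
      next
        case 2
        then show ?thesis using tp by simp
      qed
    qed
    have len: "length (U @ [m (w, pc w)]) \<le> dep w" using IH U_def tp(4) by simp
    have cl: "set (U @ [m (w, pc w)]) \<subseteq> clones n d" using IH U_def matched_clone(1)[OF wcl] by auto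
    show ?thesis unfolding eq using w1 ch hd1 dis el len cl by simp
  qed
qed

lemma climb_props:
  assumes "a \<in> S" "a \<notin> V" "1 \<in> V" "dep a \<le> f"
  shows "climb m par pc V f a \<noteq> [] \<and> hd (climb m par pc V f a) = (a, pc a) \<and>
    nb_walk m (climb m par pc V f a) \<and> distinct (map fst (climb m par pc V f a)) \<and>
    (\<forall>y\<in>set (climb m par pc V f a). fst y \<in> S \<and> fst y \<notin> V \<and> dep (fst y) \<le> dep a) \<and>
    fst (m (last (climb m par pc V f a))) \<in> V \<and> length (climb m par pc V f a) \<le> dep a \<and>
    set (climb m par pc V f a) \<subseteq> clones n d"
  using assms
proof (induction f arbitrary: a)
  case 0
  have "a \<noteq> 1" using 0 by auto
  then show ?case using parent_props(4)[OF 0(1)] 0 by simp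
next
  case (Suc f)
  have a1: "a \<noteq> 1" using Suc.prems by auto
  note tp = parent_props[OF Suc.prems(1) a1]
  have acl: "(a, pc a) \<in> clones n d" using clone_of_member[OF Suc.prems(1) tp(2)] .
  show ?case
  proof (cases "par a \<in> V")
    case True
    then show ?thesis using tp Suc.prems acl by simp
  next
    case False
    have df: "dep (par a) \<le> f" using tp(4) Suc.prems by simp
    note IH = Suc.IH[OF tp(1) False Suc.prems(3) df]
    define R where "R = climb m par pc V f (par a)"
    have eq: "climb m par pc V (Suc f) a = (a, pc a) # R" using False R_def by simp
    have p1: "par a \<noteq> 1" using False Suc.prems by auto
    have ch: "nb_walk m ((a, pc a) # R)"
    proof -
      have "R \<noteq> []" using IH R_def by simp
      then obtain r rs where "R = r # rs" by (meson neq_Nil_conv)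
      moreover have "r = (par a, pc (par a))"
      proof -
        have "hd R = (par a, pc (par a))" using IH R_def by simp
        then show ?thesis using \<open>R = r # rs\<close> by simp
      qed
      moreover have "m (a, pc a) \<noteq> (par a, pc (par a))" using parent_edges_distinct[OF Suc.prems(1) a1 p1] .
      ultimately show ?thesis using IH R_def tp(3) by auto
    qed
    have nin: "a \<notin> fst ` set R"
    proof
      assume "a \<in> fst ` set R"
      then obtain y where "y \<in> set R" "fst y = a" by auto
      then have "dep a \<le> dep (par a)" using IH R_def by auto
      then show False using tp(4) by simp
    qed
    have dis: "distinct (map fst ((a, pc a) # R))"
      using IH R_def nin by simp
    have el: "\<forall>y\<in>set ((a, pc a) # R). fst y \<in> S \<and> fst y \<notin> V \<and> dep (fst y) \<le> dep a"
    proof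
      fix y assume "y \<in> set ((a, pc a) # R)"
      then consider "y = (a, pc a)" | "y \<in> set R" by auto
      then show "fst y \<in> S \<and> fst y \<notin> V \<and> dep (fst y) \<le> dep a"
      proof cases
        case 1 then show ?thesis using Suc.prems by simp
      next
        case 2
        then have "fst y \<in> S" "fst y \<notin> V" "dep (fst y) \<le> dep (par a)" using IH R_def by auto
        then show ?thesis using tp(4) by simp
      qed
    qed
    have lst: "fst (m (last ((a, pc a) # R))) \<in> V" using IH R_def by simp
    have len: "length ((a, pc a) # R) \<le> dep a" using IH R_def tp(4) by simp
    have cl: "set ((a, pc a) # R) \<subseteq> clones n d" using IH R_def acl by simp
    show ?thesis unfolding eq using ch dis el lst len cl IH R_def by simp
  qed
qed

lemma root_path_edge:
  assumes v: "v \<in> S" and i: "i < d" and nv: "\<not> (v \<noteq> 1 \<and> i = pc v)"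
  defines "W \<equiv> root_path m par pc (dep v) v @ [(v, i)]"
  shows "W \<noteq> [] \<and> fst (hd W) = 1 \<and> nb_walk m W \<and> distinct (map fst W) \<and>
    set W \<subseteq> clones n d \<and> length W \<le> dep v + 1 \<and> last W = (v, i)"
proof -
  define U where "U = root_path m par pc (dep v) v"
  note up = root_path_props[OF v order_refl, folded U_def]
  have "nb_walk m (U @ [(v, i)])"
  proof (cases "v = 1")
    case True then show ?thesis using up by simp
  next
    case False
    have pcl: "(v, pc v) \<in> clones n d" using clone_of_member[OF v parent_props(2)[OF v False]] .
    have "m (last U) = (v, pc v)" using up False matched_clone(2)[OF pcl] by simp
    then show ?thesis using up False nv by (simp add: nb_walk_append)
  qed
  moreover have "v \<notin> fst ` set U" using up by auto
  ultimately show ?thesis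
    using up clone_of_member[OF v i] unfolding W_def U_def[symmetric] by (cases "v = 1") auto
qed

lemma no_nontree_edge:
  assumes gd: "locally_treelike n d K m" and BK: "B \<le> K" and v: "v \<in> S" and i: "i < d"
    and mv: "m (v, i) = (u, j)" and u: "u \<in> S"
    and nv: "\<not> (v \<noteq> 1 \<and> i = pc v)" and nu: "\<not> (u \<noteq> 1 \<and> j = pc u)"
  shows False
proof -
  define W where "W = root_path m par pc (dep v) v @ [(v, i)]"
  define V where "V = fst ` set W"
  have W: "W \<noteq> []" "fst (hd W) = 1" "nb_walk m W" "distinct (map fst W)" "set W \<subseteq> clones n d"
    "length W \<le> dep v + 1" "m (last W) = (u, j)"
    using root_path_edge[OF v i nv, folded W_def] mv by auto
  have dep_le: "dep v \<le> B" "dep u \<le> B" using tree_basics(5) v u by auto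
  \<comment> \<open>The edge closes the root path of v either directly or after continuing up the tree from u
    until that path is hit; either way a closing walk of length at most 2K+1 arises.\<close>
  show False
  proof (cases "u \<in> V")
    case True
    then have "closing_walk n d m W" unfolding closing_walk_def V_def using W by simp
    moreover have "length W \<le> 2 * K + 1" using W(6) dep_le BK by simp
    ultimately show False using gd unfolding locally_treelike_def by blast
  next
    case False
    have oneV: "1 \<in> V" using W(1,2) unfolding V_def by (metis hd_in_set image_eqI)
    define C where "C = climb m par pc V (dep u) u"
    have C: "C \<noteq> []" "hd C = (u, pc u)" "nb_walk m C" "distinct (map fst C)"
      "\<forall>y\<in>set C. fst y \<in> S \<and> fst y \<notin> V" "fst (m (last C)) \<in> V" "length C \<le> dep u"
      "set C \<subseteq> clones n d"
      using climb_props[OF u False oneV order_refl, folded C_def] by auto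
    have "u \<noteq> 1" using False oneV by auto
    then have "nb_walk m (W @ C)"
      using W(1,3,7) C(1-3) nu nb_walk_append[of m W C] by auto
    moreover have "distinct (map fst (W @ C))"
      using W(4) C(4,5) unfolding V_def by (auto simp: image_iff) (metis fst_conv)
    moreover have "fst (m (last (W @ C))) \<in> fst ` set (W @ C)"
      using C(1,6) unfolding V_def by auto
    ultimately have "closing_walk n d m (W @ C)"
      unfolding closing_walk_def using W(1,2,5) C(8) by simp
    moreover have "length (W @ C) \<le> 2 * K + 1" using W(6) C(7) dep_le BK by simp
    ultimately show False using gd unfolding locally_treelike_def by blast
  qed
qed

lemma internal_edge_is_tree_edge:
  assumes gd: "locally_treelike n d K m" and BK: "B \<le> K" and v: "v \<in> S" and i: "i < d" and u: "u \<in> S"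
    and mv: "fst (m (v, i)) = u"
  shows "(v \<noteq> 1 \<and> par v = u \<and> i = pc v) \<or> (u \<noteq> 1 \<and> par u = v \<and> m (u, pc u) = (v, i))"
proof -
  obtain j where mvj: "m (v, i) = (u, j)" using mv by (metis prod.collapse)
  have "(v \<noteq> 1 \<and> i = pc v) \<or> (u \<noteq> 1 \<and> j = pc u)"
    using no_nontree_edge[OF gd BK v i mvj u] by blast
  then show ?thesis
  proof
    assume "v \<noteq> 1 \<and> i = pc v"
    then show ?thesis using parent_props(3)[OF v] mv by auto
  next
    assume a: "u \<noteq> 1 \<and> j = pc u"
    have "m (u, pc u) = (v, i)" using a mvj matched_clone(2)[OF clone_of_member[OF v i]] by simp
    then show ?thesis using a parent_props(3)[OF u] by auto
  qed
qed

lemma no_loop: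
  assumes gd: "locally_treelike n d K m" and BK: "B \<le> K"
  shows "\<not> has_loop d m S"
proof
  assume "has_loop d m S"
  then obtain u i where u: "u \<in> S" "i < d" "fst (m (u, i)) = u" unfolding has_loop_def by auto
  from internal_edge_is_tree_edge[OF gd BK u(1,2) u(1) u(3)] show False
    using parent_neq[OF u(1)] by auto
qed

lemma no_multi:
  assumes gd: "locally_treelike n d K m" and BK: "B \<le> K"
  shows "\<not> has_multi_edge d m S"
proof
  assume "has_multi_edge d m S"
  then obtain u v where uv: "u \<in> S" "v \<in> S" "u \<noteq> v" "edge_mult d m u v \<ge> 2"
    unfolding has_multi_edge_def by auto
  let ?E = "{(i, j). i < d \<and> j < d \<and> m (u, i) = (v, j)}"
  have fin: "finite ?E" by (rule finite_subset[of _ "{..<d} \<times> {..<d}"]) auto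
  have "\<not> card ?E \<le> Suc 0" using uv(4) unfolding edge_mult_def by simp
  then have "\<exists>a\<in>?E. \<exists>b\<in>?E. a \<noteq> b" using card_le_Suc0_iff_eq[OF fin] by blast
  then obtain i1 j1 i2 j2 where e: "i1 < d" "j1 < d" "m (u, i1) = (v, j1)" "i2 < d" "j2 < d" "m (u, i2) = (v, j2)"
    "(i1, j1) \<noteq> (i2, j2)" by auto
  have i12: "i1 \<noteq> i2" using e by auto
  have kind: "(u \<noteq> 1 \<and> par u = v \<and> i = pc u) \<or> (v \<noteq> 1 \<and> par v = u \<and> m (v, pc v) = (u, i))"
    if "i < d" "m (u, i) = (v, j)" for i j
    using internal_edge_is_tree_edge[OF gd BK uv(1) that(1) uv(2)] that by simp
  note c1 = kind[OF e(1,3)] and c2 = kind[OF e(4,6)]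
  show False
  proof -
    have nb: "\<not> (par u = v \<and> par v = u)" if "u \<noteq> 1" "v \<noteq> 1"
      using parent_props(4)[OF uv(1) that(1)] parent_props(4)[OF uv(2) that(2)] by auto
    show False using c1 c2 i12 nb by auto
  qed
qed

lemma adj_sym: assumes "adj d m S a b" shows "adj d m S b a"
proof -
  obtain i j where ij: "i < d" "j < d" "m (a, i) = (b, j)" "a \<in> S" "b \<in> S" "a \<noteq> b"
    using assms unfolding adj_def by auto
  have "m (b, j) = (a, i)" using ij matched_clone(2)[OF clone_of_member[OF ij(4,1)]] by simp
  then show ?thesis using ij unfolding adj_def by auto
qed

lemma adj_parent: assumes "w \<in> S" "w \<noteq> 1" shows "adj d m S w (par w)"
proof -
  have cl: "(w, pc w) \<in> clones n d" using clone_of_member[OF assms(1) parent_props(2)[OF assms]] .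
  have "snd (m (w, pc w)) < d" using matched_clone(1)[OF cl] unfolding clones_def by auto
  moreover have "m (w, pc w) = (par w, snd (m (w, pc w)))" using matched_parent[OF assms] .
  ultimately show ?thesis unfolding adj_def using parent_props[OF assms] parent_neq[OF assms] assms(1)
    by metis
qed

lemma connected_induced_tree: "connected_induced d m S"
proof -
  have up: "(adj d m S)\<^sup>*\<^sup>* w 1 \<and> (adj d m S)\<^sup>*\<^sup>* 1 w" if "w \<in> S" for w
    using that
  proof (induction "dep w" arbitrary: w rule: less_induct)
    case less
    show ?case
    proof (cases "w = 1")
      case True then show ?thesis by simp
    next
      case False
      note tp = parent_props[OF less.prems False]
      have IH: "(adj d m S)\<^sup>*\<^sup>* (par w) 1 \<and> (adj d m S)\<^sup>*\<^sup>* 1 (par w)"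
        using less.hyps[OF tp(4) tp(1)] .
      have a1: "adj d m S w (par w)" using adj_parent[OF less.prems False] .
      have a2: "adj d m S (par w) w" using adj_sym[OF a1] .
      show ?thesis using IH a1 a2
        by (meson converse_rtranclp_into_rtranclp rtranclp.rtrancl_into_rtrancl)
    qed
  qed
  show ?thesis unfolding connected_induced_def
    using up by (meson rtranclp_trans)
qed

lemma no_cycle:
  assumes gd: "locally_treelike n d K m" and BK: "B \<le> K"
  shows "\<not> has_cycle d m S"
proof
  assume "has_cycle d m S"
  then obtain xs where xs: "distinct xs" "length xs \<ge> 3" "set xs \<subseteq> S"
    "\<forall>i < length xs - 1. adj d m S (xs ! i) (xs ! Suc i)" "adj d m S (last xs) (hd xs)"
    unfolding has_cycle_def by blast
  define L where "L = length xs"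
  define nxt where "nxt = (\<lambda>k. if k = L - 1 then 0 else Suc k)"
  define prv where "prv = (\<lambda>k. if k = 0 then L - 1 else k - 1)"
  have L3: "L \<ge> 3" using xs(2) L_def by simp
  have ne: "xs \<noteq> []" using L3 L_def by auto
  have adjn: "adj d m S (xs ! k) (xs ! nxt k)" if "k < L" for k
  proof (cases "k = L - 1")
    case True
    have "xs ! k = last xs" using True ne L_def by (simp add: last_conv_nth)
    moreover have "xs ! 0 = hd xs" using ne by (simp add: hd_conv_nth)
    ultimately show ?thesis using xs(5) True unfolding nxt_def by simp
  next
    case False
    then show ?thesis using xs(4) that unfolding nxt_def L_def by simp
  qed
  have nxtprv: "nxt (prv k) = k" if "k < L" for k
    using that L3 unfolding nxt_def prv_def by auto
  have prvL: "prv k < L" "nxt k < L" if "k < L" for k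
    using that L3 unfolding nxt_def prv_def by auto
  have pn: "prv k \<noteq> nxt k" if "k < L" for k
    using that L3 unfolding nxt_def prv_def by auto
  have fin: "finite (dep ` set xs)" by simp
  have "Max (dep ` set xs) \<in> dep ` set xs" using ne by (intro Max_in) auto
  then obtain z where z: "z \<in> set xs" "dep z = Max (dep ` set xs)" by auto
  then obtain k where k: "k < L" "xs ! k = z" unfolding L_def by (auto simp: in_set_conv_nth)
  have maxd: "dep y \<le> dep z" if "y \<in> set xs" for y using z(2) that by simp
  have parz: "par z = xs ! j" if j: "j < L" "adj d m S z (xs ! j)" for j
  proof -
    obtain i where i: "i < d" "fst (m (z, i)) = xs ! j" "z \<in> S" "xs ! j \<in> S"
      using j(2) unfolding adj_def by (metis fst_conv)
    have y: "xs ! j \<in> set xs" using j(1) L_def by simp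
    from internal_edge_is_tree_edge[OF gd BK i(3) i(1) i(4) i(2)]
    show ?thesis
    proof
      assume "xs ! j \<noteq> 1 \<and> par (xs ! j) = z \<and> m (xs ! j, pc (xs ! j)) = (z, i)"
      then have "dep z < dep (xs ! j)" using parent_props(4)[OF i(4)] by auto
      then show ?thesis using maxd[OF y] by simp
    qed simp
  qed
  have a1: "par z = xs ! nxt k" using parz[OF prvL(2)[OF k(1)]] adjn[OF k(1)] k(2) by simp
  have "adj d m S (xs ! prv k) (xs ! k)" using adjn[OF prvL(1)[OF k(1)]] nxtprv[OF k(1)] by simp
  then have a2: "par z = xs ! prv k" using parz[OF prvL(1)[OF k(1)]] adj_sym k(2) by simp
  have "xs ! nxt k \<noteq> xs ! prv k"
    using xs(1) pn[OF k(1)] prvL[OF k(1)] L_def by (simp add: nth_eq_iff_index_eq)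
  then show False using a1 a2 by simp
qed

lemma is_tree_rooted:
  assumes gd: "locally_treelike n d K m" and BK: "B \<le> K"
  shows "is_tree d m S"
  unfolding is_tree_def using connected_induced_tree no_cycle[OF gd BK] no_loop[OF gd BK] no_multi[OF gd BK] by simp

lemma card_le_external_clones:
  assumes gd: "locally_treelike n d K m" and BK: "B \<le> K" and d3: "d \<ge> 3"
  shows "card S \<le> (\<Sum>v\<in>S. card {i\<in>{..<d}. fst (m (v, i)) \<notin> S})"
proof -
  define I where "I = Sigma S (\<lambda>v. {i\<in>{..<d}. fst (m (v, i)) \<in> S})"
  define J where "J = Sigma S (\<lambda>v. {i\<in>{..<d}. fst (m (v, i)) \<notin> S})"
  have finS: "finite S" using tree_basics(1) .
  have sumJ: "(\<Sum>v\<in>S. card {i\<in>{..<d}. fst (m (v, i)) \<notin> S}) = card J"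
    unfolding J_def using finS by (simp add: card_SigmaI)
  have un: "S \<times> {..<d} = I \<union> J" "I \<inter> J = {}" unfolding I_def J_def by auto
  have finIJ: "finite I" "finite J" using finS unfolding I_def J_def by auto
  have cardIJ: "card I + card J = d * card S"
  proof -
    have "card (S \<times> {..<d}) = card S * d" by (simp add: card_cartesian_product)
    then show ?thesis using card_Un_disjoint[OF finIJ un(2)] un(1) by (simp add: mult.commute)
  qed
  have sub: "I \<subseteq> (\<lambda>w. (w, pc w)) ` (S - {1}) \<union> (\<lambda>w. m (w, pc w)) ` (S - {1})"
  proof
    fix x assume "x \<in> I"
    then obtain v i where x: "x = (v, i)" "v \<in> S" "i < d" "fst (m (v, i)) \<in> S" unfolding I_def by auto
    from internal_edge_is_tree_edge[OF gd BK x(2,3,4) refl]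
    show "x \<in> (\<lambda>w. (w, pc w)) ` (S - {1}) \<union> (\<lambda>w. m (w, pc w)) ` (S - {1})"
    proof
      assume "v \<noteq> 1 \<and> par v = fst (m (v, i)) \<and> i = pc v"
      then show ?thesis using x by auto
    next
      assume a: "fst (m (v, i)) \<noteq> 1 \<and> par (fst (m (v, i))) = v \<and> m (fst (m (v, i)), pc (fst (m (v, i)))) = (v, i)"
      have "fst (m (v, i)) \<in> S - {1}" using a x by simp
      then have "m (fst (m (v, i)), pc (fst (m (v, i)))) \<in> (\<lambda>w. m (w, pc w)) ` (S - {1})"
        by (rule imageI)
      then show ?thesis using a x(1) by simp
    qed
  qed
  have "card I \<le> card ((\<lambda>w. (w, pc w)) ` (S - {1}) \<union> (\<lambda>w. m (w, pc w)) ` (S - {1}))"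
    using sub finS by (intro card_mono) auto
  also have "\<dots> \<le> card ((\<lambda>w. (w, pc w)) ` (S - {1})) + card ((\<lambda>w. m (w, pc w)) ` (S - {1}))"
    by (rule card_Un_le)
  also have "\<dots> \<le> card (S - {1}) + card (S - {1})"
    by (intro add_mono card_image_le) (use finS in auto)
  also have "\<dots> = 2 * (card S - 1)" using finS tree_basics(2) by simp
  finally have cI: "card I \<le> 2 * (card S - 1)" .
  have "card S \<ge> 1" using finS tree_basics(2) by (metis card_0_eq empty_iff less_one not_le)
  moreover have "d * card S \<ge> 3 * card S" using d3 by (rule mult_le_mono1)
  ultimately have "card J \<ge> card S" using cardIJ cI by linarith
  then show ?thesis using sumJ by simp
qed

end

section \<open>One round of the push protocol\<close>

definition push_round :: "clone_map \<Rightarrow> (nat \<Rightarrow> nat) \<Rightarrow> nat set \<Rightarrow> nat set" where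
  "push_round m c S = S \<union> (\<lambda>v. fst (m (v, c v))) ` S"

lemma informed_Suc: "informed m \<omega> (Suc t) = push_round m (\<omega> !! t) (informed m \<omega> t)"
  by (simp add: push_round_def)

definition new_parent :: "clone_map \<Rightarrow> (nat \<Rightarrow> nat) \<Rightarrow> nat set \<Rightarrow> (nat \<Rightarrow> nat) \<Rightarrow> nat \<Rightarrow> nat" where
  "new_parent m c S par u = (if u \<in> S then par u else (SOME v. v \<in> S \<and> fst (m (v, c v)) = u))"

definition new_parent_clone :: "clone_map \<Rightarrow> (nat \<Rightarrow> nat) \<Rightarrow> nat set \<Rightarrow> (nat \<Rightarrow> nat) \<Rightarrow> (nat \<Rightarrow> nat) \<Rightarrow> nat \<Rightarrow> nat" where
  "new_parent_clone m c S par pc u = (if u \<in> S then pc u else snd (m (new_parent m c S par u, c (new_parent m c S par u))))"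

definition new_depth :: "nat set \<Rightarrow> nat \<Rightarrow> (nat \<Rightarrow> nat) \<Rightarrow> nat \<Rightarrow> nat" where
  "new_depth S B dep u = (if u \<in> S then dep u else Suc B)"

context rooted_tree
begin

lemma clone_index_lt: assumes "v \<in> S" "fst (m (v, c v)) \<notin> S" shows "c v < d"
proof (rule ccontr)
  assume "\<not> c v < d"
  then have "(v, c v) \<notin> clones n d" unfolding clones_def by auto
  then have "m (v, c v) = (v, c v)" using pm unfolding matchings_on_def by auto
  then show False using assms by simp
qed

lemma target_in_range: assumes "v \<in> S" shows "fst (m (v, c v)) \<in> {1..n}"
proof (cases "fst (m (v, c v)) \<in> S")
  case True then show ?thesis using tree_basics(3) by auto
next
  case False
  then have "(v, c v) \<in> clones n d" using clone_of_member[OF assms clone_index_lt[of v c, OF assms False]] by simp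
  then show ?thesis using matched_clone(1) unfolding clones_def by (metis SigmaE fst_conv)
qed

lemma new_parent_props:
  assumes "u \<in> push_round m c S" "u \<notin> S"
  shows "new_parent m c S par u \<in> S" "fst (m (new_parent m c S par u, c (new_parent m c S par u))) = u"
proof -
  have ex: "\<exists>v. v \<in> S \<and> fst (m (v, c v)) = u" using assms unfolding push_round_def by auto
  show "new_parent m c S par u \<in> S" "fst (m (new_parent m c S par u, c (new_parent m c S par u))) = u"
    unfolding new_parent_def using assms(2) someI_ex[OF ex] by auto
qed

lemma rooted_tree_push_round:
  shows "rooted_tree_on n d m (push_round m c S) (Suc B) (new_parent m c S par) (new_parent_clone m c S par pc) (new_depth S B dep)"
proof -
  have tcl: "fst (m (v, c v)) \<in> {1..n}" if "v \<in> S" for v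
    using target_in_range[OF that] .
  have sub: "push_round m c S \<subseteq> {1..n}" using tree_basics(3) tcl unfolding push_round_def by auto
  have fin: "finite (push_round m c S)" using tree_basics(1) unfolding push_round_def by simp
  have old: "new_parent m c S par w \<in> push_round m c S \<and> new_parent_clone m c S par pc w < d \<and>
      fst (m (w, new_parent_clone m c S par pc w)) = new_parent m c S par w \<and> new_depth S B dep (new_parent m c S par w) < new_depth S B dep w"
    if "w \<in> S" "w \<noteq> 1" for w
    using parent_props[OF that] that unfolding new_parent_def new_parent_clone_def new_depth_def push_round_def by auto
  have new: "new_parent m c S par w \<in> push_round m c S \<and> new_parent_clone m c S par pc w < d \<and>
      fst (m (w, new_parent_clone m c S par pc w)) = new_parent m c S par w \<and> new_depth S B dep (new_parent m c S par w) < new_depth S B dep w"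
    if "w \<in> push_round m c S" "w \<notin> S" for w
  proof -
    define p where "p = new_parent m c S par w"
    note np = new_parent_props[OF that, folded p_def]
    have pcl: "(p, c p) \<in> clones n d" using clone_of_member[OF np(1) clone_index_lt[of p c, OF np(1)]] np(2) that(2) by simp
    have mp: "m (p, c p) = (w, snd (m (p, c p)))" using np(2) by (metis prod.collapse)
    have npcw: "new_parent_clone m c S par pc w = snd (m (p, c p))" using that(2) unfolding new_parent_clone_def p_def by simp
    have "snd (m (p, c p)) < d" using matched_clone(1)[OF pcl] unfolding clones_def by auto
    moreover have "m (w, new_parent_clone m c S par pc w) = (p, c p)"
      using npcw mp matched_clone(2)[OF pcl] by (metis)
    moreover have "new_depth S B dep p < new_depth S B dep w"
      using np(1) tree_basics(5)[OF np(1)] that(2) unfolding new_depth_def by simp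
    ultimately show ?thesis using np(1) npcw unfolding p_def push_round_def by auto
  qed
  have a1: "\<forall>w\<in>push_round m c S. new_depth S B dep w \<le> Suc B"
  proof
    fix w assume "w \<in> push_round m c S"
    show "new_depth S B dep w \<le> Suc B" using tree_basics(5)[of w] unfolding new_depth_def by (cases "w \<in> S") auto
  qed
  have a2: "\<forall>w\<in>push_round m c S - {1}. new_parent m c S par w \<in> push_round m c S \<and> new_parent_clone m c S par pc w < d \<and>
      fst (m (w, new_parent_clone m c S par pc w)) = new_parent m c S par w \<and> new_depth S B dep (new_parent m c S par w) < new_depth S B dep w"
  proof
    fix w assume w: "w \<in> push_round m c S - {1}"
    show "new_parent m c S par w \<in> push_round m c S \<and> new_parent_clone m c S par pc w < d \<and>
      fst (m (w, new_parent_clone m c S par pc w)) = new_parent m c S par w \<and> new_depth S B dep (new_parent m c S par w) < new_depth S B dep w"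
    proof (cases "w \<in> S")
      case True then show ?thesis using old w by blast
    next
      case False then show ?thesis using new w by blast
    qed
  qed
  have a3: "1 \<in> push_round m c S" using tree_basics(2) unfolding push_round_def by simp
  have a4: "new_depth S B dep 1 = 0" using tree_basics(2,4) unfolding new_depth_def by simp
  show ?thesis unfolding rooted_tree_on_def using fin sub a1 a2 a3 a4 by blast
qed

lemma new_targets_inj:
  assumes gd: "locally_treelike n d K m" and BK: "Suc B \<le> K"
    and v: "v1 \<in> S" "v2 \<in> S" and eq: "fst (m (v1, c v1)) = fst (m (v2, c v2))"
    and ns: "fst (m (v1, c v1)) \<notin> S"
  shows "v1 = v2"
proof -
  interpret T: rooted_tree n d m "push_round m c S" "Suc B" "new_parent m c S par" "new_parent_clone m c S par pc" "new_depth S B dep"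
    using pm rooted_tree_push_round by unfold_locales auto
  define u where "u = fst (m (v1, c v1))"
  have uS: "u \<in> push_round m c S" using v unfolding u_def push_round_def by auto
  have key: "new_parent m c S par u = v" if vv: "v \<in> S" "fst (m (v, c v)) = u" for v
  proof -
    have vS: "v \<in> push_round m c S" using vv unfolding push_round_def by auto
    have cv: "c v < d" using clone_index_lt[of v c, OF vv(1)] vv(2) ns u_def by simp
    from T.internal_edge_is_tree_edge[OF gd BK vS cv uS vv(2)]
    show ?thesis
    proof
      assume "v \<noteq> 1 \<and> new_parent m c S par v = u \<and> c v = new_parent_clone m c S par pc v"
      then have "par v = u" using vv(1) unfolding new_parent_def by simp
      then show ?thesis using parent_props(1)[OF vv(1)] ns u_def \<open>v \<noteq> 1 \<and> _\<close> by auto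
    qed auto
  qed
  show ?thesis using key[OF v(1)] key[OF v(2)] eq u_def by simp
qed

lemma card_push_round:
  assumes gd: "locally_treelike n d K m" and BK: "Suc B \<le> K"
  shows "card (push_round m c S) = card S + card {v\<in>S. fst (m (v, c v)) \<notin> S}"
proof -
  define T where "T = {v\<in>S. fst (m (v, c v)) \<notin> S}"
  have eq: "push_round m c S = S \<union> (\<lambda>v. fst (m (v, c v))) ` T" unfolding push_round_def T_def by auto
  have inj: "inj_on (\<lambda>v. fst (m (v, c v))) T"
    using new_targets_inj[OF gd BK] unfolding T_def inj_on_def by auto
  have finT: "finite T" using tree_basics(1) unfolding T_def by simp
  have "card (push_round m c S) = card S + card ((\<lambda>v. fst (m (v, c v))) ` T)"
    unfolding eq by (rule card_Un_disjoint) (use tree_basics(1) finT T_def in auto)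
  also have "card ((\<lambda>v. fst (m (v, c v))) ` T) = card T" using card_image[OF inj] .
  finally show ?thesis unfolding T_def .
qed

end

section \<open>Expected growth of the informed set\<close>

lemma set_choice_pmf:
  assumes "d > 0"
  shows "set_pmf (choice_pmf n d) = PiE_dflt {1..n} 0 (\<lambda>_. {..<d})" "finite (set_pmf (choice_pmf n d))"
proof -
  have "set_pmf (choice_pmf n d) = PiE_dflt {1..n} 0 (set_pmf \<circ> (\<lambda>_. pmf_of_set {..<d}))"
    unfolding choice_pmf_def by (rule set_Pi_pmf) simp
  also have "set_pmf \<circ> (\<lambda>_. pmf_of_set {..<d}) = (\<lambda>_. {..<d})"
  proof -
    have "{..<d} \<noteq> {}" using assms by auto
    then show ?thesis by (auto simp: fun_eq_iff)
  qed
  finally show s: "set_pmf (choice_pmf n d) = PiE_dflt {1..n} 0 (\<lambda>_. {..<d})" .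
  show "finite (set_pmf (choice_pmf n d))" unfolding s by (intro finite_PiE_dflt) auto
qed

lemma choice_lt: "d > 0 \<Longrightarrow> c \<in> set_pmf (choice_pmf n d) \<Longrightarrow> v \<in> {1..n} \<Longrightarrow> c v < d"
  using set_choice_pmf(1)[of d n] unfolding PiE_dflt_def by auto

lemma prob_choice_coord:
  assumes "d > 0" "v \<in> {1..n}"
  shows "measure_pmf.prob (choice_pmf n d) {c. P (c v)} = real (card {i\<in>{..<d}. P i}) / real d"
proof -
  have "measure_pmf.prob (choice_pmf n d) {c. P (c v)} = measure_pmf.prob (map_pmf (\<lambda>c. c v) (choice_pmf n d)) {i. P i}"
    by (simp add: vimage_def)
  also have "map_pmf (\<lambda>c. c v) (choice_pmf n d) = pmf_of_set {..<d}"
    unfolding choice_pmf_def using assms by (subst Pi_pmf_component) auto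
  also have "measure_pmf.prob (pmf_of_set {..<d}) {i. P i} = real (card ({..<d} \<inter> {i. P i})) / real (card {..<d})"
    using assms by (subst measure_pmf_of_set) auto
  also have "{..<d} \<inter> {i. P i} = {i\<in>{..<d}. P i}" by auto
  finally show ?thesis by simp
qed

lemma expectation_card_choice:
  assumes d0: "d > 0" and S: "finite S" "S \<subseteq> {1..n}"
  shows "measure_pmf.expectation (choice_pmf n d) (\<lambda>c. real (card {v\<in>S. P v (c v)}))
    = (\<Sum>v\<in>S. real (card {i\<in>{..<d}. P v i})) / real d"
proof -
  have "(\<lambda>c. real (card {v\<in>S. P v (c v)})) = (\<lambda>c. \<Sum>v\<in>S. indicator {c. P v (c v)} c)"
    using sum.inter_filter[OF S(1), of "\<lambda>_. 1::real"]
    by (auto simp: indicator_def of_bool_def)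
  then have "measure_pmf.expectation (choice_pmf n d) (\<lambda>c. real (card {v\<in>S. P v (c v)}))
      = (\<Sum>v\<in>S. measure_pmf.prob (choice_pmf n d) {c. P v (c v)})"
    using set_choice_pmf(2)[OF d0]
    by (simp add: Bochner_Integration.integral_sum integrable_measure_pmf_finite)
  also have "\<dots> = (\<Sum>v\<in>S. real (card {i\<in>{..<d}. P v i}) / real d)"
    using S(2) by (intro sum.cong refl prob_choice_coord d0) auto
  finally show ?thesis by (simp add: sum_divide_distrib)
qed

lemma inverse_add_le:
  fixes X b :: real
  assumes "X > 0" "0 \<le> b" "b \<le> X"
  shows "1 / (X + b) \<le> 1 / X - b / (2 * X^2)"
proof -
  have "1 / X - b / (2 * X^2) - 1 / (X + b) = b * (X - b) / (2 * X^2 * (X + b))"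
    using assms by (simp add: field_simps power2_eq_square)
  also have "\<dots> \<ge> 0" using assms by (intro divide_nonneg_pos mult_nonneg_nonneg) auto
  finally show ?thesis by simp
qed

context rooted_tree
begin

lemma expectation_inverse_card_push_round:
  assumes gd: "locally_treelike n d K m" and BK: "Suc B \<le> K" and d3: "d \<ge> 3"
  shows "measure_pmf.expectation (choice_pmf n d) (\<lambda>c. 1 / real (card (push_round m c S)))
         \<le> (1 - 1 / (2 * real d)) / real (card S)"
proof -
  define X where "X = real (card S)"
  define esc where "esc = (\<lambda>c. real (card {v\<in>S. fst (m (v, c v)) \<notin> S}))"
  have d0: "d > 0" using d3 by simp
  have X0: "X > 0" using tree_basics(1,2) X_def by (simp add: card_gt_0_iff) (metis empty_iff)
  have pointwise: "1 / real (card (push_round m c S)) \<le> 1 / X - esc c / (2 * X^2)" for c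
  proof -
    have "esc c \<le> X" unfolding esc_def X_def using tree_basics(1) by (auto intro!: card_mono)
    moreover have "real (card (push_round m c S)) = X + esc c"
      using card_push_round[OF gd BK] unfolding esc_def X_def by simp
    ultimately show ?thesis using inverse_add_le[OF X0, of "esc c"] by (simp add: esc_def)
  qed
  have "card S \<le> (\<Sum>v\<in>S. card {i\<in>{..<d}. fst (m (v, i)) \<notin> S})"
    using card_le_external_clones[OF gd _ d3] BK by simp
  then have "X \<le> (\<Sum>v\<in>S. real (card {i\<in>{..<d}. fst (m (v, i)) \<notin> S}))"
    unfolding X_def of_nat_sum[symmetric] by (rule of_nat_mono)
  then have esc_ge: "X / real d \<le> measure_pmf.expectation (choice_pmf n d) esc"
    unfolding esc_def expectation_card_choice[OF d0 tree_basics(1,3), of "\<lambda>v i. fst (m (v, i)) \<notin> S"]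
    using d0 by (simp add: divide_right_mono)
  have fin: "finite (set_pmf (choice_pmf n d))" by (rule set_choice_pmf(2)[OF d0])
  have "measure_pmf.expectation (choice_pmf n d) (\<lambda>c. 1 / real (card (push_round m c S)))
      \<le> measure_pmf.expectation (choice_pmf n d) (\<lambda>c. 1 / X - esc c / (2 * X^2))"
    by (intro integral_mono_AE integrable_measure_pmf_finite fin) (auto simp: pointwise)
  also have "\<dots> = 1 / X - measure_pmf.expectation (choice_pmf n d) esc / (2 * X^2)"
    by (subst Bochner_Integration.integral_diff)
      (auto intro: integrable_measure_pmf_finite fin simp: prob_space.prob_space)
  also have "\<dots> \<le> 1 / X - X / real d / (2 * X^2)"
    using esc_ge by (intro diff_left_mono divide_right_mono) auto
  also have "\<dots> = (1 - 1 / (2 * real d)) / X"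
    using X0 d0 by (simp add: field_simps power2_eq_square)
  finally show ?thesis unfolding X_def .
qed

end

fun push_rounds :: "clone_map \<Rightarrow> (nat \<Rightarrow> nat) stream \<Rightarrow> nat set \<Rightarrow> nat \<Rightarrow> nat set" where
  "push_rounds m \<omega> S 0 = S"
| "push_rounds m \<omega> S (Suc t) = push_rounds m (stl \<omega>) (push_round m (shd \<omega>) S) t"

lemma push_rounds_Suc: "push_rounds m \<omega> S (Suc t) = push_round m (\<omega> !! t) (push_rounds m \<omega> S t)"
proof (induction t arbitrary: \<omega> S)
  case 0 then show ?case by simp
next
  case (Suc t)
  have "push_rounds m \<omega> S (Suc (Suc t)) = push_rounds m (stl \<omega>) (push_round m (shd \<omega>) S) (Suc t)" by simp
  also have "\<dots> = push_round m (stl \<omega> !! t) (push_rounds m (stl \<omega>) (push_round m (shd \<omega>) S) t)" by (rule Suc.IH)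
  finally show ?case by simp
qed

lemma informed_eq_push_rounds: "informed m \<omega> t = push_rounds m \<omega> {1} t"
  by (induction t) (simp, simp only: informed_Suc push_rounds_Suc)

lemma finite_push_round: "finite S \<Longrightarrow> finite (push_round m c S)"
  unfolding push_round_def by simp

lemma finite_push_rounds: "finite S \<Longrightarrow> finite (push_rounds m \<omega> S t)"
  by (induction t) (auto simp del: push_rounds.simps(2) simp: push_rounds_Suc finite_push_round)

lemma measurable_measure_pmf_iff: "f \<in> measurable (measure_pmf p) N \<longleftrightarrow> f \<in> UNIV \<rightarrow> space N"
  by (subst measurable_cong_sets[OF sets_measure_pmf_count_space refl]) simp

lemma measurable_push_round:
  assumes mm: "mm \<in> measurable M (count_space UNIV)"
    and om: "\<And>v. (\<lambda>x. om x v) \<in> measurable M (count_space UNIV)"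
    and S: "finite S"
  shows "(\<lambda>x. push_round (mm x) (om x) S) \<in> measurable M (count_space {S. finite S})"
proof -
  define H where "H = (\<lambda>r x. S \<union> (\<lambda>v. fst (mm x (v, r v))) ` S)"
  have Hm: "(\<lambda>x. H r x) \<in> measurable M (count_space {S. finite S})" for r
  proof -
    have "(\<lambda>m'. S \<union> (\<lambda>v. fst (m' (v, r v))) ` S) \<in> measurable (count_space UNIV) (count_space {S. finite S})"
      using S by auto
    from measurable_compose[OF mm this] show ?thesis unfolding H_def by simp
  qed
  have gm: "(\<lambda>x. restrict (om x) S) \<in> measurable M (count_space (PiE S (\<lambda>_. UNIV)))"
  proof (subst measurable_count_space_eq_countable)
    show "countable (PiE S (\<lambda>_. UNIV :: nat set))" using S by (intro countable_PiE) auto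
    show "(\<lambda>x. restrict (om x) S) \<in> space M \<rightarrow> PiE S (\<lambda>_. UNIV) \<and>
      (\<forall>a\<in>PiE S (\<lambda>_. UNIV). (\<lambda>x. restrict (om x) S) -` {a} \<inter> space M \<in> sets M)"
    proof (intro conjI ballI)
      show "(\<lambda>x. restrict (om x) S) \<in> space M \<rightarrow> PiE S (\<lambda>_. UNIV)" by auto
      fix a assume a: "a \<in> PiE S (\<lambda>_. UNIV :: nat set)"
      have "(\<lambda>x. restrict (om x) S) -` {a} \<inter> space M = {x \<in> space M. \<forall>v\<in>S. om x v = a v}"
        using a by (auto simp: fun_eq_iff PiE_def extensional_def restrict_def)
      also have "\<dots> \<in> sets M"
      proof (rule sets.sets_Collect_finite_All[OF _ S])
        fix v assume "v \<in> S"
        have "(\<lambda>x. om x v) -` {a v} \<inter> space M \<in> sets M"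
          using measurable_sets[OF om[of v], of "{a v}"] by simp
        moreover have "(\<lambda>x. om x v) -` {a v} \<inter> space M = {x \<in> space M. om x v = a v}" by auto
        ultimately show "{x \<in> space M. om x v = a v} \<in> sets M" by simp
      qed
      finally show "(\<lambda>x. restrict (om x) S) -` {a} \<inter> space M \<in> sets M" .
    qed
  qed
  have "(\<lambda>x. H (restrict (om x) S) x) \<in> measurable M (count_space {S. finite S})"
    by (rule measurable_compose_countable'[OF Hm gm]) (use S in \<open>intro countable_PiE; auto\<close>)
  moreover have "H (restrict (om x) S) x = push_round (mm x) (om x) S" for x
    unfolding H_def push_round_def by auto
  ultimately show ?thesis by simp
qed

lemma measurable_push_rounds:
  assumes mm: "mm \<in> measurable M (count_space UNIV)"
    and om: "\<And>t v. (\<lambda>x. (om x !! t) v) \<in> measurable M (count_space UNIV)"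
    and S: "finite S"
  shows "(\<lambda>x. push_rounds (mm x) (om x) S t) \<in> measurable M (count_space {S. finite S})"
proof (induction t)
  case 0
  show ?case using S by simp
next
  case (Suc t)
  have "(\<lambda>x. (\<lambda>A x. push_round (mm x) (om x !! t) A) (push_rounds (mm x) (om x) S t) x) \<in> measurable M (count_space {S. finite S})"
  proof (rule measurable_compose_countable'[OF _ Suc.IH])
    fix A :: "nat set" assume "A \<in> {S. finite S}"
    then show "(\<lambda>x. push_round (mm x) (om x !! t) A) \<in> measurable M (count_space {S. finite S})"
      using measurable_push_round[OF mm om] by simp
  qed (rule countable_Collect_finite)
  then show ?case by (simp del: push_rounds.simps(2) add: push_rounds_Suc)
qed

lemma measurable_fst_pmf: "fst \<in> measurable (measure_pmf p \<Otimes>\<^sub>M N) (count_space UNIV)"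
proof -
  have "(\<lambda>m. m) \<in> measurable (measure_pmf p) (count_space UNIV)" by (simp add: measurable_measure_pmf_iff)
  from measurable_compose[OF measurable_fst this] show ?thesis by simp
qed

lemma measurable_snd_choice: "(\<lambda>x. (snd x !! t) v) \<in> measurable (M \<Otimes>\<^sub>M stream_space (measure_pmf q)) (count_space UNIV)"
proof -
  have a: "(\<lambda>x. snd x !! t) \<in> measurable (M \<Otimes>\<^sub>M stream_space (measure_pmf q)) (measure_pmf q)"
    by (rule measurable_compose[OF measurable_snd measurable_snth])
  have b: "(\<lambda>c. c v) \<in> measurable (measure_pmf q) (count_space UNIV)" by (simp add: measurable_measure_pmf_iff)
  from measurable_compose[OF a b] show ?thesis by simp
qed

lemma measurable_stream_choice: "(\<lambda>\<omega>. (\<omega> !! t) v) \<in> measurable (stream_space (measure_pmf q)) (count_space UNIV)"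
proof -
  have b: "(\<lambda>c. c v) \<in> measurable (measure_pmf q) (count_space UNIV)" by (simp add: measurable_measure_pmf_iff)
  from measurable_compose[OF measurable_snth b] show ?thesis by simp
qed

abbreviation choice_stream :: "nat \<Rightarrow> nat \<Rightarrow> (nat \<Rightarrow> nat) stream measure" where
  "choice_stream n d \<equiv> stream_space (measure_pmf (choice_pmf n d))"

lemma subset_push_rounds: "S \<subseteq> push_rounds m \<omega> S t"
  by (induction t) (auto simp del: push_rounds.simps(2) simp: push_rounds_Suc push_round_def)

lemma measurable_push_rounds_stream: assumes "finite S" shows "(\<lambda>\<omega>. push_rounds m \<omega> S t) \<in> measurable (choice_stream n d) (count_space {S. finite S})"
proof -
  have "(\<lambda>_. m) \<in> measurable (choice_stream n d) (count_space UNIV)" by simp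
  from measurable_push_rounds[OF this measurable_stream_choice assms] show ?thesis by simp
qed

lemma prob_space_choice_stream: "prob_space (choice_stream n d)"
  by (rule prob_space.prob_space_stream_space) (rule prob_space_measure_pmf)

lemma nn_integral_push_rounds_Suc:
  assumes "finite S"
  shows "(\<integral>\<^sup>+\<omega>. f (push_rounds m \<omega> S (Suc t)) \<partial>choice_stream n d)
    = (\<integral>\<^sup>+c. (\<integral>\<^sup>+\<omega>. f (push_rounds m \<omega> (push_round m c S) t) \<partial>choice_stream n d) \<partial>choice_pmf n d)"
proof -
  have "f \<in> measurable (count_space {S. finite S}) borel" by simp
  from measurable_compose[OF measurable_push_rounds_stream[OF assms] this]
  have "(\<lambda>\<omega>. f (push_rounds m \<omega> S (Suc t))) \<in> borel_measurable (choice_stream n d)"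
    by (simp del: push_rounds.simps(2))
  from prob_space.nn_integral_stream_space[OF prob_space_measure_pmf this] show ?thesis by simp
qed

lemma nn_integral_inverse_card_le:
  assumes gd: "locally_treelike n d K m" and d3: "d \<ge> 3" and pm: "m \<in> matchings_on (clones n d)"
    and "rooted_tree_on n d m S B par pc dep" and "B + t \<le> K"
  shows "(\<integral>\<^sup>+\<omega>. ennreal (1 / real (card (push_rounds m \<omega> S t))) \<partial>choice_stream n d)
    \<le> ennreal ((1 - 1 / (2 * real d)) ^ t / real (card S))"
  using assms(4,5)
proof (induction t arbitrary: S B par pc dep)
  case 0
  interpret prob_space "choice_stream n d" by (rule prob_space_choice_stream)
  show ?case by (simp add: emeasure_space_1)
next
  case (Suc t)
  define \<rho> where "\<rho> = 1 - 1 / (2 * real d)"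
  have \<rho>0: "0 \<le> \<rho>" using d3 unfolding \<rho>_def by (simp add: field_simps)
  interpret T: rooted_tree n d m S B par pc dep using pm Suc.prems(1) by unfold_locales
  have d0: "d > 0" using d3 by simp
  have IH: "(\<integral>\<^sup>+\<omega>. ennreal (1 / real (card (push_rounds m \<omega> (push_round m c S) t))) \<partial>choice_stream n d)
      \<le> ennreal (\<rho> ^ t * (1 / real (card (push_round m c S))))" for c
    using Suc.IH[OF T.rooted_tree_push_round] Suc.prems(2) unfolding \<rho>_def by simp
  have "(\<integral>\<^sup>+\<omega>. ennreal (1 / real (card (push_rounds m \<omega> S (Suc t)))) \<partial>choice_stream n d)
      = (\<integral>\<^sup>+c. (\<integral>\<^sup>+\<omega>. ennreal (1 / real (card (push_rounds m \<omega> (push_round m c S) t)))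
          \<partial>choice_stream n d) \<partial>choice_pmf n d)"
    by (rule nn_integral_push_rounds_Suc[OF T.tree_basics(1)])
  also have "\<dots> \<le> (\<integral>\<^sup>+c. ennreal (\<rho> ^ t * (1 / real (card (push_round m c S)))) \<partial>choice_pmf n d)"
    by (intro nn_integral_mono IH)
  also have "\<dots> = ennreal (measure_pmf.expectation (choice_pmf n d) (\<lambda>c. \<rho> ^ t * (1 / real (card (push_round m c S)))))"
    using \<rho>0 set_choice_pmf(2)[OF d0]
    by (intro nn_integral_eq_integral) (auto intro!: integrable_measure_pmf_finite)
  also have "measure_pmf.expectation (choice_pmf n d) (\<lambda>c. \<rho> ^ t * (1 / real (card (push_round m c S))))
      = \<rho> ^ t * measure_pmf.expectation (choice_pmf n d) (\<lambda>c. 1 / real (card (push_round m c S)))"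
    by (rule integral_mult_right_zero)
  also have "\<dots> \<le> ennreal (\<rho> ^ t * (\<rho> / real (card S)))"
    using T.expectation_inverse_card_push_round[OF gd _ d3] Suc.prems(2) \<rho>0
    unfolding \<rho>_def by (intro ennreal_leI mult_left_mono) auto
  finally show ?case unfolding \<rho>_def by (simp add: mult.commute)
qed

lemma (in finite_measure) measure_le_by_nn_integral_inverse:
  fixes f :: "'a \<Rightarrow> real"
  assumes f: "f \<in> borel_measurable M" and pos: "\<And>x. f x > 0"
    and int: "(\<integral>\<^sup>+x. ennreal (1 / f x) \<partial>M) \<le> ennreal b" and b: "b \<ge> 0" and L: "L \<ge> 0"
  shows "measure M {x \<in> space M. f x \<le> L} \<le> L * b"
proof -
  define A where "A = {x \<in> space M. f x \<le> L}"
  have A: "A \<in> sets M" unfolding A_def using f by measurable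
  have "emeasure M A = (\<integral>\<^sup>+x. indicator A x \<partial>M)"
    using A by simp
  also have "\<dots> \<le> (\<integral>\<^sup>+x. ennreal L * ennreal (1 / f x) \<partial>M)"
  proof (rule nn_integral_mono)
    fix x
    have "indicator A x \<le> ennreal (L * (1 / f x))"
      using pos[of x] by (auto simp: A_def indicator_def field_simps intro: ennreal_leI)
    moreover have "ennreal L * ennreal (1 / f x) = ennreal (L * (1 / f x))"
      using L pos[of x] by (subst ennreal_mult) auto
    ultimately show "indicator A x \<le> ennreal L * ennreal (1 / f x)" by metis
  qed
  also have "\<dots> = ennreal L * (\<integral>\<^sup>+x. ennreal (1 / f x) \<partial>M)"
    using f by (intro nn_integral_cmult) measurable
  also have "\<dots> \<le> ennreal (L * b)"
    using int L b by (simp add: ennreal_mult mult_left_mono)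
  finally show ?thesis
    unfolding A_def[symmetric] emeasure_eq_measure using L b by (simp add: ennreal_le_iff)
qed

lemma prob_card_push_rounds_le:
  assumes gd: "locally_treelike n d K m" and d3: "d \<ge> 3" and pm: "m \<in> matchings_on (clones n d)"
    and ti: "rooted_tree_on n d m S B par pc dep" and BK: "B + t \<le> K" and L: "L \<ge> 0"
  shows "measure (choice_stream n d) {\<omega>. real (card (push_rounds m \<omega> S t)) \<le> L}
       \<le> L * ((1 - 1 / (2 * real d)) ^ t / real (card S))"
proof -
  interpret P: prob_space "choice_stream n d" by (rule prob_space_choice_stream)
  interpret T: rooted_tree n d m S B par pc dep using pm ti by unfold_locales
  have finS: "finite S" using T.tree_basics(1) .
  have "(\<lambda>A. real (card A)) \<in> measurable (count_space {S. finite S}) borel" by simp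
  from measurable_compose[OF measurable_push_rounds_stream[OF finS] this]
  have meas: "(\<lambda>\<omega>. real (card (push_rounds m \<omega> S t))) \<in> borel_measurable (choice_stream n d)" .
  have pos: "real (card (push_rounds m \<omega> S t)) > 0" for \<omega>
    using subset_push_rounds[of S m \<omega> t] T.tree_basics(2) finite_push_rounds[OF finS, of m \<omega> t]
    by (metis card_gt_0_iff empty_iff of_nat_0_less_iff subsetD)
  have "measure (choice_stream n d) {\<omega> \<in> space (choice_stream n d). real (card (push_rounds m \<omega> S t)) \<le> L}
      \<le> L * ((1 - 1 / (2 * real d)) ^ t / real (card S))"
    by (rule P.measure_le_by_nn_integral_inverse[OF meas pos
          nn_integral_inverse_card_le[OF gd d3 pm ti BK] _ L])
      (use d3 in \<open>simp add: field_simps\<close>)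
  then show ?thesis by (simp add: space_stream_space)
qed

section \<open>The probability bound for a fixed number of rounds\<close>

lemma rooted_tree_singleton: "n \<ge> 1 \<Longrightarrow> rooted_tree_on n d m {1} 0 par pc (\<lambda>_. 0)"
  unfolding rooted_tree_on_def by auto

lemma rooted_tree_push_rounds:
  assumes pm: "m \<in> matchings_on (clones n d)" and ti: "rooted_tree_on n d m S B par pc dep"
  shows "\<exists>par pc dep. rooted_tree_on n d m (push_rounds m \<omega> S t) (B + t) par pc dep"
proof (induction t)
  case 0 then show ?case using ti by auto
next
  case (Suc t)
  then obtain par' pc' dep' where t: "rooted_tree_on n d m (push_rounds m \<omega> S t) (B + t) par' pc' dep'" by blast
  interpret T: rooted_tree n d m "push_rounds m \<omega> S t" "B + t" par' pc' dep' using pm t by unfold_locales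
  show ?case using T.rooted_tree_push_round[of "\<omega> !! t"] by (auto simp del: push_rounds.simps(2) simp: push_rounds_Suc)
qed

lemma is_tree_informed:
  assumes pm: "m \<in> matchings_on (clones n d)" and gd: "locally_treelike n d K m" and n1: "n \<ge> 1" and tK: "t \<le> K"
  shows "is_tree d m (informed m \<omega> t)"
proof -
  obtain par pc dep where t: "rooted_tree_on n d m (push_rounds m \<omega> {1} t) (0 + t) par pc dep"
    using rooted_tree_push_rounds[OF pm rooted_tree_singleton[OF n1]] by blast
  interpret T: rooted_tree n d m "push_rounds m \<omega> {1} t" "0 + t" par pc dep using pm t by unfold_locales
  show ?thesis using T.is_tree_rooted[OF gd] tK by (simp add: informed_eq_push_rounds)
qed

lemma T0_exists_tree:
  assumes pm: "m \<in> matchings_on (clones n d)" and gd: "locally_treelike n d K m" and n1: "n \<ge> 1"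
    and big: "real (card (informed m \<omega> K)) > ln (real n) ^ 7"
  shows "\<exists>t. is_T0 n m \<omega> t \<and> t \<le> K \<and> is_tree d m (informed m \<omega> t)"
proof -
  define t where "t = (LEAST t. real (card (informed m \<omega> t)) > ln (real n) ^ 7)"
  have t1: "real (card (informed m \<omega> t)) > ln (real n) ^ 7" unfolding t_def using big by (rule LeastI)
  have t2: "t \<le> K" unfolding t_def using big by (rule Least_le)
  have t3: "\<forall>s<t. \<not> real (card (informed m \<omega> s)) > ln (real n) ^ 7"
    unfolding t_def using not_less_Least by blast
  show ?thesis using t1 t2 t3 is_tree_informed[OF pm gd n1 t2] unfolding is_T0_def by blast
qed

lemma measurable_informed:
  "(\<lambda>x. informed (fst x) (snd x) t) \<in> measurable (push_space n d) (count_space {S. finite S})"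
proof -
  have "(\<lambda>x. push_rounds (fst x) (snd x) {1} t) \<in> measurable (push_space n d) (count_space {S. finite S})"
    unfolding push_space_def by (rule measurable_push_rounds[OF measurable_fst_pmf measurable_snd_choice]) simp
  then show ?thesis by (simp add: informed_eq_push_rounds)
qed

lemma pred_informed:
  "Measurable.pred (push_space n d) (\<lambda>x. P (fst x) (informed (fst x) (snd x) t))"
proof -
  have "(\<lambda>x. (\<lambda>A x. P (fst x) A) (informed (fst x) (snd x) t) x) \<in> measurable (push_space n d) (count_space UNIV)"
  proof (rule measurable_compose_countable'[OF _ measurable_informed countable_Collect_finite])
    fix A :: "nat set"
    have "(\<lambda>m. P m A) \<in> measurable (count_space UNIV) (count_space UNIV)" by simp
    from measurable_compose[OF measurable_fst_pmf[of "config_pmf n d" "choice_stream n d"] this]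
    show "(\<lambda>x. P (fst x) A) \<in> measurable (push_space n d) (count_space UNIV)"
      unfolding push_space_def by simp
  qed
  then show ?thesis by simp
qed

lemma pred_fst: "Measurable.pred (push_space n d) (\<lambda>x. P (fst x))"
proof -
  have "(\<lambda>m. P m) \<in> measurable (count_space UNIV) (count_space UNIV)" by simp
  from measurable_compose[OF measurable_fst_pmf[of "config_pmf n d" "choice_stream n d"] this] show ?thesis unfolding push_space_def by simp
qed

lemma pred_T0:
  "Measurable.pred (push_space n d) (\<lambda>x. \<exists>t. is_T0 n (fst x) (snd x) t \<and> Q t (fst x) (informed (fst x) (snd x) t))"
proof (rule pred_intros_countable(2))
  fix t
  have a: "Measurable.pred (push_space n d) (\<lambda>x. ln (real n) ^ 7 < real (card (informed (fst x) (snd x) t)))"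
    using pred_informed[of "\<lambda>_ A. ln (real n) ^ 7 < real (card A)"] by simp
  have b: "Measurable.pred (push_space n d) (\<lambda>x. Q t (fst x) (informed (fst x) (snd x) t))"
    using pred_informed[of "\<lambda>m A. Q t m A"] by simp
  have c: "Measurable.pred (push_space n d) (\<lambda>x. \<forall>s\<in>{..<t}. \<not> ln (real n) ^ 7 < real (card (informed (fst x) (snd x) s)))"
    using pred_informed[of "\<lambda>_ A. \<not> ln (real n) ^ 7 < real (card A)"]
    by (intro pred_intros_finite(3)) auto
  have "Measurable.pred (push_space n d) (\<lambda>x. (ln (real n) ^ 7 < real (card (informed (fst x) (snd x) t)) \<and>
      (\<forall>s\<in>{..<t}. \<not> ln (real n) ^ 7 < real (card (informed (fst x) (snd x) s)))) \<and> Q t (fst x) (informed (fst x) (snd x) t))"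
    by (intro pred_intros_logic(3) a b c)
  then show "Measurable.pred (push_space n d) (\<lambda>x. is_T0 n (fst x) (snd x) t \<and> Q t (fst x) (informed (fst x) (snd x) t))"
    unfolding is_T0_def by (simp add: Ball_def lessThan_iff conj_assoc)
qed

lemma space_push_space: "space (push_space n d) = UNIV"
  unfolding push_space_def by (simp add: space_pair_measure space_stream_space)

lemma prob_space_push_space: "prob_space (push_space n d)"
  unfolding push_space_def
  by (intro prob_space_pair prob_space_measure_pmf prob_space_choice_stream)

lemma sets_push_space_pred: assumes "Measurable.pred (push_space n d) P" shows "{x. P x} \<in> sets (push_space n d)"
  using assms unfolding pred_def space_push_space by simp

lemma measure_push_space_fst:
  "measure (push_space n d) {x. P (fst x)} = measure_pmf.prob (config_pmf n d) {m. P m}"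
proof -
  interpret S: prob_space "choice_stream n d" by (rule prob_space_choice_stream)
  have "{x. P (fst x)} = {m. P m} \<times> space (choice_stream n d)"
    by (auto simp: space_stream_space)
  then have "emeasure (push_space n d) {x. P (fst x)} = emeasure (measure_pmf (config_pmf n d)) {m. P m}"
    unfolding push_space_def
    by (simp add: S.emeasure_pair_measure_Times S.emeasure_space_1)
  then show ?thesis
    by (simp add: measure_def)
qed

lemma measure_push_space_le_slices:
  assumes A: "A \<in> sets (push_space n d)" and c: "c \<ge> 0"
    and slice: "\<And>m. measure (choice_stream n d) (Pair m -` A) \<le> c"
  shows "measure (push_space n d) A \<le> c"
proof -
  interpret S: prob_space "choice_stream n d" by (rule prob_space_choice_stream)
  interpret P: prob_space "push_space n d" by (rule prob_space_push_space)
  have "emeasure (push_space n d) A = (\<integral>\<^sup>+m. emeasure (choice_stream n d) (Pair m -` A) \<partial>config_pmf n d)"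
    using A unfolding push_space_def by (rule S.emeasure_pair_measure_alt)
  also have "\<dots> \<le> (\<integral>\<^sup>+m. ennreal c \<partial>config_pmf n d)"
    using slice by (intro nn_integral_mono) (simp add: S.emeasure_eq_measure ennreal_leI)
  also have "\<dots> = ennreal c" by (simp add: measure_pmf.emeasure_space_1)
  finally show ?thesis using c by (simp add: P.emeasure_eq_measure)
qed

lemma push_prob_ge:
  fixes P :: "clone_map \<Rightarrow> (nat \<Rightarrow> nat) stream \<Rightarrow> bool"
  assumes d3: "d \<ge> 3" and n1: "n \<ge> 1" and ev: "even (n * d)"
    and incl: "\<And>m \<omega>. m \<in> matchings_on (clones n d) \<Longrightarrow> locally_treelike n d K m \<Longrightarrow>
        real (card (informed m \<omega> K)) > ln (real n) ^ 7 \<Longrightarrow> P m \<omega>"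
    and Pm: "Measurable.pred (push_space n d) (\<lambda>x. P (fst x) (snd x))"
  shows "push_prob n d P \<ge> 1 - (measure_pmf.prob (config_pmf n d) {m. \<not> locally_treelike n d K m}
            + ln (real n) ^ 7 * (1 - 1 / (2 * real d)) ^ K)"
proof -
  define M where "M = push_space n d"
  define L where "L = ln (real n) ^ 7"
  define \<rho> where "\<rho> = 1 - 1 / (2 * real d)"
  define good where "good = (\<lambda>m. m \<in> matchings_on (clones n d) \<and> locally_treelike n d K m)"
  interpret prob_space M unfolding M_def by (rule prob_space_push_space)
  have L0: "L \<ge> 0" unfolding L_def using n1 by simp
  define G where "G = {x. good (fst x) \<and> L < real (card (informed (fst x) (snd x) K))}"
  define A1 where "A1 = {x :: clone_map \<times> (nat \<Rightarrow> nat) stream. \<not> good (fst x)}"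
  define A2 where "A2 = {x. good (fst x) \<and> real (card (informed (fst x) (snd x) K)) \<le> L}"
  have sets: "G \<in> sets M" "A1 \<in> sets M" "A2 \<in> sets M"
    unfolding G_def A1_def A2_def M_def
    by (intro sets_push_space_pred pred_fst pred_informed[where P = "\<lambda>m A. good m \<and> _ A"])+
  have "space M = G \<union> (A1 \<union> A2)"
    unfolding G_def A1_def A2_def M_def space_push_space by auto
  then have "1 = measure M (G \<union> (A1 \<union> A2))" by (metis prob_space)
  also have "\<dots> \<le> measure M G + measure M (A1 \<union> A2)"
    by (rule measure_subadditive) (use sets emeasure_finite in auto)
  also have "\<dots> \<le> measure M G + (measure M A1 + measure M A2)"
    using measure_subadditive[OF sets(2,3)] by simp
  finally have main: "1 \<le> measure M G + (measure M A1 + measure M A2)" .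
  have "measure M A1 = measure_pmf.prob (config_pmf n d) {m. \<not> good m}"
    unfolding A1_def M_def by (rule measure_push_space_fst)
  also have "\<dots> = measure_pmf.prob (config_pmf n d) ({m. \<not> good m} \<inter> set_pmf (config_pmf n d))"
    by (simp add: measure_Int_set_pmf)
  also have "{m. \<not> good m} \<inter> set_pmf (config_pmf n d)
      = {m. \<not> locally_treelike n d K m} \<inter> set_pmf (config_pmf n d)"
    using set_config_pmf(1)[OF ev] unfolding good_def by auto
  also have "measure_pmf.prob (config_pmf n d) \<dots> = measure_pmf.prob (config_pmf n d) {m. \<not> locally_treelike n d K m}"
    by (simp add: measure_Int_set_pmf)
  finally have mA1: "measure M A1 = measure_pmf.prob (config_pmf n d) {m. \<not> locally_treelike n d K m}" .
  have bound0: "0 \<le> L * \<rho> ^ K" using L0 d3 unfolding \<rho>_def by (simp add: field_simps)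
  have "measure M A2 \<le> L * \<rho> ^ K"
    unfolding M_def
  proof (rule measure_push_space_le_slices)
    show "A2 \<in> sets (push_space n d)" using sets(3) M_def by simp
    show "0 \<le> L * \<rho> ^ K" by (rule bound0)
    fix m
    show "measure (choice_stream n d) (Pair m -` A2) \<le> L * \<rho> ^ K"
    proof (cases "good m")
      case True
      then have "Pair m -` A2 = {\<omega>. real (card (push_rounds m \<omega> {1} K)) \<le> L}"
        unfolding A2_def by (auto simp: informed_eq_push_rounds)
      moreover have "m \<in> matchings_on (clones n d)" "locally_treelike n d K m"
        using True unfolding good_def by auto
      ultimately show ?thesis
        using prob_card_push_rounds_le[OF _ d3 _ rooted_tree_singleton[OF n1] _ L0, where t = K]
        unfolding \<rho>_def by simp
    qed (simp add: A2_def bound0)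
  qed
  moreover have "measure M G \<le> push_prob n d P"
    unfolding push_prob_def M_def[symmetric] using incl Pm
    by (intro finite_measure_mono) (auto simp: G_def L_def good_def M_def space_push_space pred_def)
  ultimately show ?thesis using main mA1 unfolding L_def \<rho>_def by linarith
qed

section \<open>Asymptotics\<close>

definition round_factor :: "nat \<Rightarrow> real" where "round_factor d = 16 * real d"

definition round_bound :: "nat \<Rightarrow> nat \<Rightarrow> nat" where
  "round_bound d n = nat \<lfloor>round_factor d * ln (ln (real n))\<rfloor>"

definition error_exponent :: "nat \<Rightarrow> real" where
  "error_exponent d = 2 * round_factor d * ln (2 * real d) + 2"

definition error_const :: "nat \<Rightarrow> real" where
  "error_const d = 4 * real d ^ 2 * (2 * round_factor d + 1) ^ 2 *
     (2 powr error_exponent d) * (error_exponent d powr error_exponent d)"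

lemma one_less_of_ln_ge:
  assumes "ln (real n) \<ge> 3"
  shows "real n > 1"
proof (rule ccontr)
  assume "\<not> real n > 1"
  then have "ln (real n) \<le> 0" by (cases "n = 0") (auto simp: ln_le_zero_iff)
  then show False using assms by simp
qed

lemma ln_ln_ge_one:
  assumes "ln (real n) \<ge> 3"
  shows "ln (ln (real n)) \<ge> 1"
proof -
  have "exp 1 \<le> ln (real n)" using exp_le assms by simp
  then have "ln (exp 1) \<le> ln (ln (real n))" using assms by (subst ln_le_cancel_iff) auto
  then show ?thesis by simp
qed

lemma round_bound_le:
  assumes "ln (real n) \<ge> 3" "d \<ge> 3"
  shows "real (round_bound d n) \<le> round_factor d * ln (ln (real n))"
  using ln_ln_ge_one[OF assms(1)] assms(2) unfolding round_bound_def round_factor_def by simp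

lemma round_bound_gt:
  assumes "ln (real n) \<ge> 3" "d \<ge> 3"
  shows "real (round_bound d n) > round_factor d * ln (ln (real n)) - 1"
  using ln_ln_ge_one[OF assms(1)] assms(2) unfolding round_bound_def round_factor_def by linarith

lemma walk_length_le:
  assumes l3: "ln (real n) \<ge> 3" and d3: "d \<ge> 3"
  shows "real (2 * round_bound d n + 1) \<le> (2 * round_factor d + 1) * ln (real n)"
proof -
  have "ln (ln (real n)) \<le> ln (real n)" using ln_le_minus_one[of "ln (real n)"] l3 by simp
  then have "2 * round_factor d * ln (ln (real n)) + 1 \<le> 2 * round_factor d * ln (real n) + ln (real n)"
    using l3 d3 by (intro add_mono mult_left_mono) (auto simp: round_factor_def)
  then show ?thesis using round_bound_le[OF l3 d3] by (simp add: algebra_simps)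
qed

lemma ln_le_two_sqrt:
  fixes x :: real
  assumes "x > 1"
  shows "ln x \<le> 2 * sqrt x"
  using ln_powr_bound[of x "1/2"] assms by (simp add: powr_half_sqrt)

lemma walk_length_fits:
  assumes l3: "ln (real n) \<ge> 3" and d3: "d \<ge> 3"
    and nbig: "sqrt (real n) \<ge> 8 * (2 * round_factor d + 1)"
  shows "4 * (2 * round_bound d n + 1) \<le> n * d"
proof -
  have n1: "real n > 1" by (rule one_less_of_ln_ge[OF l3])
  have "real (4 * (2 * round_bound d n + 1)) \<le> 4 * ((2 * round_factor d + 1) * ln (real n))"
    using walk_length_le[OF l3 d3] by simp
  also have "\<dots> \<le> 4 * ((2 * round_factor d + 1) * (2 * sqrt (real n)))"
    using ln_le_two_sqrt[OF n1] d3 by (intro mult_left_mono) (auto simp: round_factor_def)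
  also have "\<dots> = 8 * (2 * round_factor d + 1) * sqrt (real n)" by simp
  also have "\<dots> \<le> sqrt (real n) * sqrt (real n)" by (rule mult_right_mono[OF nbig]) simp
  also have "\<dots> \<le> real (n * d)"
    using n1 d3 by simp
  finally show ?thesis by (simp only: of_nat_le_iff)
qed

lemma geometric_term_le:
  assumes l3: "ln (real n) \<ge> 3" and d3: "d \<ge> 3"
  shows "ln (real n) ^ 7 * (1 - 1 / (2 * real d)) ^ round_bound d n \<le> 2 / ln (real n)"
proof -
  define l where "l = ln (real n)"
  define u where "u = ln l"
  define \<rho> where "\<rho> = 1 - 1 / (2 * real d)"
  have l3': "l \<ge> 3" using l3 l_def by simp
  have u1: "u \<ge> 1" using ln_ln_ge_one[OF l3] unfolding u_def l_def .
  have \<rho>: "0 < \<rho>" "\<rho> \<ge> 1/2" unfolding \<rho>_def using d3 by (auto simp: field_simps)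
  have "\<rho> ^ round_bound d n = \<rho> powr real (round_bound d n)" using \<rho> by (simp add: powr_realpow)
  also have "\<dots> \<le> \<rho> powr (round_factor d * u - 1)"
    using round_bound_gt[OF l3 d3] \<rho> unfolding u_def l_def \<rho>_def by (intro powr_mono') auto
  also have "\<dots> = \<rho> powr (round_factor d * u) / \<rho>"
    using \<rho> by (simp add: powr_diff)
  also have "\<rho> powr (round_factor d * u) = exp (round_factor d * ln \<rho> * u)"
    using \<rho> by (simp add: powr_def mult_ac)
  also have "\<dots> \<le> exp (- 8 * u)"
  proof -
    \<comment> \<open>The factor 16 d in the round bound is chosen so that this exponent is at most -8 ln ln n.\<close>
    have "round_factor d * ln \<rho> \<le> round_factor d * (\<rho> - 1)"
      using ln_le_minus_one[of \<rho>] \<rho> d3 by (intro mult_left_mono) (auto simp: round_factor_def)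
    also have "\<dots> = -8" unfolding round_factor_def \<rho>_def using d3 by (simp add: field_simps)
    finally have "round_factor d * ln \<rho> * u \<le> -8 * u" using u1 by (intro mult_right_mono) auto
    then show ?thesis by simp
  qed
  also have "exp (- 8 * u) = 1 / l ^ 8"
  proof -
    have "exp (- 8 * u) = exp u powr (- 8)" by (simp add: powr_def)
    also have "exp u = l" unfolding u_def using l3' by simp
    finally show ?thesis using l3' by (simp add: powr_minus powr_realpow divide_inverse)
  qed
  finally have "\<rho> ^ round_bound d n \<le> 1 / l ^ 8 / \<rho>"
    using \<rho> by (simp add: divide_right_mono)
  then have "l ^ 7 * \<rho> ^ round_bound d n \<le> l ^ 7 * (1 / l ^ 8 / \<rho>)"
    using l3' by (intro mult_left_mono) auto
  also have "\<dots> = 1 / (l * \<rho>)" using l3' \<rho> by (simp add: field_simps numeral_eq_Suc)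
  also have "\<dots> \<le> 2 / l" using l3' \<rho> by (simp add: field_simps)
  finally show ?thesis unfolding l_def \<rho>_def .
qed

lemma ln_powr_le_sqrt:
  fixes x b :: real
  assumes "x > 1" "b > 0"
  shows "ln x powr b \<le> 2 powr b * b powr b * sqrt x"
proof -
  have sx: "sqrt x > 1" using assms by simp
  have "ln x = 2 * ln (sqrt x)" using assms by (simp add: ln_sqrt)
  then have "ln x powr b = 2 powr b * ln (sqrt x) powr b"
    using sx by (simp add: powr_mult)
  also have "ln (sqrt x) powr b \<le> b powr b * sqrt x" by (rule ln_powr_bound2[OF sx assms(2)])
  finally show ?thesis by (simp add: mult_left_mono mult.assoc)
qed

lemma power_walk_length_le:
  assumes l3: "ln (real n) \<ge> 3" and d3: "d \<ge> 3"
  shows "(2 * real d) ^ (2 * round_bound d n + 1 + 1)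
     \<le> 4 * real d ^ 2 * ln (real n) powr (error_exponent d - 2)"
proof -
  have dd: "2 * real d > 1" using d3 by simp
  have "(2 * real d) ^ (2 * round_bound d n + 1 + 1) = (2 * real d) powr real (2 * round_bound d n + 1 + 1)"
    by (rule powr_realpow[symmetric]) (use dd in simp)
  also have "\<dots> \<le> (2 * real d) powr (2 * round_factor d * ln (ln (real n)) + 2)"
    using round_bound_le[OF l3 d3] dd by (intro powr_mono) auto
  also have "\<dots> = (2 * real d) powr 2 * (2 * real d) powr (2 * round_factor d * ln (ln (real n)))"
    by (simp add: powr_add)
  also have "(2 * real d) powr 2 = 4 * real d ^ 2"
    using dd by (simp add: powr_numeral power2_eq_square)
  also have "(2 * real d) powr (2 * round_factor d * ln (ln (real n)))
      = exp (ln (ln (real n))) powr (error_exponent d - 2)"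
    using dd by (simp add: powr_def error_exponent_def mult_ac)
  also have "exp (ln (ln (real n))) = ln (real n)"
    using l3 by simp
  finally show ?thesis .
qed

lemma closing_term_le:
  assumes l3: "ln (real n) \<ge> 3" and d3: "d \<ge> 3"
  shows "real (2 * round_bound d n + 1) ^ 2 * (2 * real d) ^ (2 * round_bound d n + 1 + 1) / real (n * d)
    \<le> error_const d / sqrt (real n)"
proof -
  define l where "l = ln (real n)"
  define b where "b = error_exponent d"
  have n1: "real n > 1" by (rule one_less_of_ln_ge[OF l3])
  have l3': "l \<ge> 3" using l3 l_def by simp
  have b0: "b > 2" unfolding b_def error_exponent_def round_factor_def using d3 by simp
  have "real (2 * round_bound d n + 1) ^ 2 * (2 * real d) ^ (2 * round_bound d n + 1 + 1)
      \<le> ((2 * round_factor d + 1) * l) ^ 2 * (4 * real d ^ 2 * l powr (b - 2))"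
    using walk_length_le[OF l3 d3] power_walk_length_le[OF l3 d3] unfolding l_def b_def
    by (intro mult_mono power_mono) auto
  also have "\<dots> = 4 * real d ^ 2 * (2 * round_factor d + 1) ^ 2 * l powr b"
    using l3' b0 by (simp add: powr_diff powr_numeral power_mult_distrib)
  also have "\<dots> \<le> 4 * real d ^ 2 * (2 * round_factor d + 1) ^ 2 * (2 powr b * b powr b * sqrt (real n))"
    using ln_powr_le_sqrt[OF n1, of b] b0 unfolding l_def by (intro mult_left_mono) auto
  also have "\<dots> = error_const d * sqrt (real n)"
    unfolding error_const_def b_def by (simp add: mult_ac)
  finally have num: "real (2 * round_bound d n + 1) ^ 2 * (2 * real d) ^ (2 * round_bound d n + 1 + 1)
      \<le> error_const d * sqrt (real n)" .
  have "real (2 * round_bound d n + 1) ^ 2 * (2 * real d) ^ (2 * round_bound d n + 1 + 1) / real (n * d)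
      \<le> error_const d * sqrt (real n) / real n"
    using num n1 d3 by (intro frac_le) (auto intro: order_trans[OF _ num])
  also have "\<dots> = error_const d * sqrt (real n) / (sqrt (real n) * sqrt (real n))"
    using n1 by simp
  also have "\<dots> = error_const d / sqrt (real n)"
    using n1 by (simp del: real_sqrt_mult_self)
  finally show ?thesis .
qed

lemma eventually_large_n:
  fixes d :: nat and \<epsilon> :: real
  assumes "\<epsilon> > 0"
  shows "\<exists>N. \<forall>n\<ge>N. ln (real n) \<ge> 3 \<and> sqrt (real n) \<ge> 8 * (2 * round_factor d + 1) \<and>
            error_const d / sqrt (real n) + 2 / ln (real n) < \<epsilon>"
proof -
  have ln_n: "filterlim (\<lambda>n. ln (real n)) at_top sequentially"
    by (rule filterlim_compose[OF ln_at_top filterlim_real_sequentially])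
  have sq_n: "filterlim (\<lambda>n. sqrt (real n)) at_top sequentially"
    by (rule filterlim_compose[OF sqrt_at_top filterlim_real_sequentially])
  have lim: "((\<lambda>n. error_const d / sqrt (real n) + 2 / ln (real n)) \<longlongrightarrow> 0) sequentially"
  proof -
    have "((\<lambda>n. error_const d / sqrt (real n)) \<longlongrightarrow> 0) sequentially"
      by (rule tendsto_divide_0[OF tendsto_const filterlim_at_top_imp_at_infinity[OF sq_n]])
    moreover have "((\<lambda>n. 2 / ln (real n)) \<longlongrightarrow> 0) sequentially"
      by (rule tendsto_divide_0[OF tendsto_const filterlim_at_top_imp_at_infinity[OF ln_n]])
    ultimately show ?thesis using tendsto_add[of _ 0 _ _ 0] by fastforce
  qed
  have e1: "eventually (\<lambda>n. ln (real n) \<ge> 3) sequentially"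
    using ln_n by (simp add: filterlim_at_top)
  have e2: "eventually (\<lambda>n. sqrt (real n) \<ge> 8 * (2 * round_factor d + 1)) sequentially"
    using sq_n by (simp add: filterlim_at_top)
  have e3: "eventually (\<lambda>n. error_const d / sqrt (real n) + 2 / ln (real n) < \<epsilon>) sequentially"
    using order_tendstoD(2)[OF lim assms] .
  have "eventually (\<lambda>n. ln (real n) \<ge> 3 \<and> sqrt (real n) \<ge> 8 * (2 * round_factor d + 1) \<and>
            error_const d / sqrt (real n) + 2 / ln (real n) < \<epsilon>) sequentially"
    using e1 e2 e3 by eventually_elim auto
  then show ?thesis by (simp add: eventually_sequentially)
qed

definition early_tree_T0 :: "nat \<Rightarrow> nat \<Rightarrow> clone_map \<Rightarrow> (nat \<Rightarrow> nat) stream \<Rightarrow> bool" where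
  "early_tree_T0 d n m \<omega> \<longleftrightarrow> (\<exists>t. is_T0 n m \<omega> t \<and> real t \<le> round_factor d * ln (ln (real n)) \<and>
     is_tree d m (informed m \<omega> t))"

lemma push_prob_early_tree_T0_ge:
  assumes d3: "d \<ge> 3" and ev: "even (n * d)" and l3: "ln (real n) \<ge> 3"
    and nbig: "sqrt (real n) \<ge> 8 * (2 * round_factor d + 1)"
  shows "push_prob n d (early_tree_T0 d n) \<ge> 1 - (error_const d / sqrt (real n) + 2 / ln (real n))"
proof -
  define K where "K = round_bound d n"
  have n1: "n \<ge> 1" using l3 by (cases n) auto
  have fits: "4 * (2 * K + 1) \<le> n * d" using walk_length_fits[OF l3 d3 nbig] K_def by simp
  have "measure_pmf.prob (config_pmf n d) {m. \<not> locally_treelike n d K m}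
      \<le> (\<Sum>k\<in>{1..2*K+1}. real (card (closing_pair_walks n d k)) / (real (n * d) - 2 * real k) ^ k)"
    by (rule prob_not_locally_treelike[OF ev]) (use fits in simp)
  also have "\<dots> \<le> real (2 * K + 1) ^ 2 * (2 * real d) ^ (2 * K + 1 + 1) / real (n * d)"
    by (rule closing_pair_walks_sum_le) (use fits d3 in auto)
  finally have not_treelike: "measure_pmf.prob (config_pmf n d) {m. \<not> locally_treelike n d K m}
      \<le> real (2 * K + 1) ^ 2 * (2 * real d) ^ (2 * K + 1 + 1) / real (n * d)" .
  have early: "early_tree_T0 d n m \<omega>"
    if m: "m \<in> matchings_on (clones n d)" "locally_treelike n d K m"
      and big: "real (card (informed m \<omega> K)) > ln (real n) ^ 7" for m \<omega>
  proof -
    obtain t where "is_T0 n m \<omega> t" "t \<le> K" "is_tree d m (informed m \<omega> t)"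
      using T0_exists_tree[OF m n1 big] by blast
    then show ?thesis
      unfolding early_tree_T0_def using round_bound_le[OF l3 d3] K_def by force
  qed
  have meas: "Measurable.pred (push_space n d) (\<lambda>x. early_tree_T0 d n (fst x) (snd x))"
    unfolding early_tree_T0_def
    using pred_T0[where Q = "\<lambda>t m A. real t \<le> round_factor d * ln (ln (real n)) \<and> is_tree d m A"]
    by (simp add: conj_assoc)
  have "push_prob n d (early_tree_T0 d n) \<ge> 1 - (measure_pmf.prob (config_pmf n d)
      {m. \<not> locally_treelike n d K m} + ln (real n) ^ 7 * (1 - 1 / (2 * real d)) ^ K)"
    by (rule push_prob_ge[OF d3 n1 ev]) (simp_all add: early meas)
  then show ?thesis
    using not_treelike closing_term_le[OF l3 d3, folded K_def] geometric_term_le[OF l3 d3, folded K_def]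
    by linarith
qed

lemma eventually_push_prob_early_tree_T0:
  assumes "d \<ge> 3" and "\<epsilon> > 0"
  shows "\<exists>N. \<forall>n\<ge>N. even (d * n) \<longrightarrow> push_prob n d (early_tree_T0 d n) \<ge> 1 - \<epsilon>"
proof -
  obtain N where N: "\<forall>n\<ge>N. ln (real n) \<ge> 3 \<and> sqrt (real n) \<ge> 8 * (2 * round_factor d + 1) \<and>
      error_const d / sqrt (real n) + 2 / ln (real n) < \<epsilon>"
    using eventually_large_n[OF assms(2)] by blast
  have "push_prob n d (early_tree_T0 d n) \<ge> 1 - \<epsilon>" if "n \<ge> N" "even (d * n)" for n
    using push_prob_early_tree_T0_ge[OF assms(1), of n] N that by (fastforce simp: mult.commute)
  then show ?thesis by blast
qed

lemma push_prob_mono: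
  assumes "\<And>m \<omega>. P m \<omega> \<Longrightarrow> Q m \<omega>" and "Measurable.pred (push_space n d) (\<lambda>x. Q (fst x) (snd x))"
  shows "push_prob n d P \<le> push_prob n d Q"
proof -
  interpret prob_space "push_space n d" by (rule prob_space_push_space)
  show ?thesis
    unfolding push_prob_def using assms by (intro finite_measure_mono) (auto simp: pred_def)
qed

theorem lemma6:
  fixes d :: nat
  assumes "d \<ge> 3"
  shows "(\<exists>C>0. \<forall>\<epsilon>>0. \<exists>N. \<forall>n\<ge>N. even (d * n) \<longrightarrow>
            push_prob n d (\<lambda>m \<omega>. \<exists>t. is_T0 n m \<omega> t \<and> real t \<le> C * ln (ln (real n)))
              \<ge> 1 - \<epsilon>)
       \<and> (\<forall>\<epsilon>>0. \<exists>N. \<forall>n\<ge>N. even (d * n) \<longrightarrow>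
            push_prob n d (\<lambda>m \<omega>. \<exists>t. is_T0 n m \<omega> t \<and> is_tree d m (informed m \<omega> t))
              \<ge> 1 - \<epsilon>)"
proof -
  have fast: "push_prob n d (early_tree_T0 d n)
      \<le> push_prob n d (\<lambda>m \<omega>. \<exists>t. is_T0 n m \<omega> t \<and> real t \<le> round_factor d * ln (ln (real n)))" for n
    by (rule push_prob_mono, force simp: early_tree_T0_def)
      (use pred_T0[where Q = "\<lambda>t _ _. real t \<le> round_factor d * ln (ln (real n))"] in simp)
  have tree: "push_prob n d (early_tree_T0 d n)
      \<le> push_prob n d (\<lambda>m \<omega>. \<exists>t. is_T0 n m \<omega> t \<and> is_tree d m (informed m \<omega> t))" for n
    by (rule push_prob_mono, force simp: early_tree_T0_def)
      (use pred_T0[where Q = "\<lambda>_ m A. is_tree d m A"] in simp)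
  have "round_factor d > 0" using assms by (simp add: round_factor_def)
  then show ?thesis
    using eventually_push_prob_early_tree_T0[OF assms] fast tree by (meson order_trans)
qed

end
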